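(* For every $-\frac32<\beta<0<\gamma<\alpha<\frac32$ there exists $C>0$ such that for every $f:\mathbb T^2\to\mathbb R$, $$[f]_\gamma\le C[f]_\beta^\lambda[f]_\alpha^{1-\lambda},$$ where $\lambda\in(0,1)$ is given by $\gamma=\lambda\beta+(1-\lambda)\alpha$. If $f$ has vanishing average on $\mathbb T^2$, the inequality also holds for $\gamma=0$ with $[f]_\gamma$ replaced by $\|f\|_{L^\infty}$.
   Context: $\mathbb T^2=[0,1)^2$, $d(x,y)=|x_1-y_1|+|x_2-y_2|^{2/3}$. For $\alpha\in(0,1]$, $[f]_\alpha=\sup_{x\ne y}|f(y)-f(x)|/d^\alpha(y,x)$; for $\alpha\in(1,\frac32)$, $[f]_\alpha=\sup_{x\ne y}|f(y)-f(x)-\partial_1f(x)(y-x)_1|/d^\alpha(y,x)$. For a periodic distribution $f$ and $\beta\in(-1,0)$, $[f]_\beta=\inf\{|c|+[g]_{\beta+1}+[h]_{\beta+3/2}:f=c+\partial_1g+\partial_2h\}$; for $\beta\in(-\frac32,-1]$, $[f]_\beta=\inf\{|c|+[g]_{\beta+2}+[h]_{\beta+3/2}:f=c+\partial_1^2g+\partial_2h\}$. *)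

theory Defs
  imports "HOL-Analysis.Analysis"
begin

text \<open>Functions on the torus are represented as 1-periodic functions on the plane.\<close>

definition periodic2 :: "(real \<times> real \<Rightarrow> real) \<Rightarrow> bool" where
  "periodic2 f \<longleftrightarrow> (\<forall>a b. f (a + 1, b) = f (a, b) \<and> f (a, b + 1) = f (a, b))"

definition dT :: "real \<times> real \<Rightarrow> real \<times> real \<Rightarrow> real" where
  "dT x y = \<bar>fst x - fst y\<bar> + \<bar>snd x - snd y\<bar> powr (2/3)"

definition part1 :: "(real \<times> real \<Rightarrow> real) \<Rightarrow> real \<times> real \<Rightarrow> real" where
  "part1 f x = deriv (\<lambda>t. f (t, snd x)) (fst x)"

definition part2 :: "(real \<times> real \<Rightarrow> real) \<Rightarrow> real \<times> real \<Rightarrow> real" where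
  "part2 f x = deriv (\<lambda>t. f (fst x, t)) (snd x)"

definition has_part1 :: "(real \<times> real \<Rightarrow> real) \<Rightarrow> bool" where
  "has_part1 f \<longleftrightarrow> (\<forall>x. (\<lambda>t. f (t, snd x)) differentiable (at (fst x)))"

definition has_part2 :: "(real \<times> real \<Rightarrow> real) \<Rightarrow> bool" where
  "has_part2 f \<longleftrightarrow> (\<forall>x. (\<lambda>t. f (fst x, t)) differentiable (at (snd x)))"

text \<open>C^infinity: all iterated partial derivatives exist and are continuous.\<close>
definition smooth2 :: "(real \<times> real \<Rightarrow> real) \<Rightarrow> bool" where
  "smooth2 \<phi> \<longleftrightarrow> (\<exists>S. \<phi> \<in> S \<and> (\<forall>\<psi>\<in>S. continuous_on UNIV \<psi> \<and> has_part1 \<psi> \<and> has_part2 \<psi>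
       \<and> part1 \<psi> \<in> S \<and> part2 \<psi> \<in> S))"

definition holder_quot :: "real \<Rightarrow> (real \<times> real \<Rightarrow> real) \<Rightarrow> real \<times> real \<Rightarrow> real \<times> real \<Rightarrow> real" where
  "holder_quot \<alpha> f x y =
     (if \<alpha> \<le> 1 then \<bar>f y - f x\<bar> else \<bar>f y - f x - part1 f x * (fst y - fst x)\<bar>) / (dT y x powr \<alpha>)"

definition holder_fin :: "real \<Rightarrow> (real \<times> real \<Rightarrow> real) \<Rightarrow> bool" where
  "holder_fin \<alpha> f \<longleftrightarrow> (1 < \<alpha> \<longrightarrow> has_part1 f) \<and> bdd_above {holder_quot \<alpha> f x y | x y. x \<noteq> y}"

definition holder_sn :: "real \<Rightarrow> (real \<times> real \<Rightarrow> real) \<Rightarrow> real" where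
  "holder_sn \<alpha> f = Sup {holder_quot \<alpha> f x y | x y. x \<noteq> y}"

abbreviation unitsq :: "(real \<times> real) set" where
  "unitsq \<equiv> cbox (0, 0) (1, 1)"

text \<open>Distributional identities f = c + d1 g + d2 h and f = c + d1^2 g + d2 h,
  tested against smooth periodic test functions.\<close>
definition decomp1 :: "(real \<times> real \<Rightarrow> real) \<Rightarrow> real \<Rightarrow> (real \<times> real \<Rightarrow> real) \<Rightarrow> (real \<times> real \<Rightarrow> real) \<Rightarrow> bool" where
  "decomp1 f c g h \<longleftrightarrow> (\<forall>\<phi>. smooth2 \<phi> \<and> periodic2 \<phi> \<longrightarrow>
     integral unitsq (\<lambda>x. f x * \<phi> x) =
       c * integral unitsq \<phi> - integral unitsq (\<lambda>x. g x * part1 \<phi> x)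
         - integral unitsq (\<lambda>x. h x * part2 \<phi> x))"

definition decomp2 :: "(real \<times> real \<Rightarrow> real) \<Rightarrow> real \<Rightarrow> (real \<times> real \<Rightarrow> real) \<Rightarrow> (real \<times> real \<Rightarrow> real) \<Rightarrow> bool" where
  "decomp2 f c g h \<longleftrightarrow> (\<forall>\<phi>. smooth2 \<phi> \<and> periodic2 \<phi> \<longrightarrow>
     integral unitsq (\<lambda>x. f x * \<phi> x) =
       c * integral unitsq \<phi> + integral unitsq (\<lambda>x. g x * part1 (part1 \<phi>) x)
         - integral unitsq (\<lambda>x. h x * part2 \<phi> x))"

text \<open>Admissible values |c| + [g] + [h] for the negative seminorm, beta in (-3/2,0).\<close>
definition neg_set :: "real \<Rightarrow> (real \<times> real \<Rightarrow> real) \<Rightarrow> real set" where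
  "neg_set \<beta> f =
    (if -1 < \<beta> then
       {\<bar>c\<bar> + holder_sn (\<beta> + 1) g + holder_sn (\<beta> + 3/2) h | c g h.
          periodic2 g \<and> periodic2 h \<and> holder_fin (\<beta> + 1) g \<and> holder_fin (\<beta> + 3/2) h \<and> decomp1 f c g h}
     else
       {\<bar>c\<bar> + holder_sn (\<beta> + 2) g + holder_sn (\<beta> + 3/2) h | c g h.
          periodic2 g \<and> periodic2 h \<and> holder_fin (\<beta> + 2) g \<and> holder_fin (\<beta> + 3/2) h \<and> decomp2 f c g h})"

definition neg_fin :: "real \<Rightarrow> (real \<times> real \<Rightarrow> real) \<Rightarrow> bool" where
  "neg_fin \<beta> f \<longleftrightarrow> neg_set \<beta> f \<noteq> {}"

definition neg_sn :: "real \<Rightarrow> (real \<times> real \<Rightarrow> real) \<Rightarrow> real" where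
  "neg_sn \<beta> f = Inf (neg_set \<beta> f)"

definition sup_norm :: "(real \<times> real \<Rightarrow> real) \<Rightarrow> real" where
  "sup_norm f = Sup (range (\<lambda>x. \<bar>f x\<bar>))"

end

theory Submission
  imports Defs
begin

fun wallis :: "nat \<Rightarrow> real" where
  "wallis 0 = 1"
| "wallis (Suc m) = wallis m * (2 * m + 1) / (2 * m + 2)"

lemma wallis_pos: "0 < wallis m"
  by (induction m) auto

lemma wallis_nonzero [simp]: "wallis m \<noteq> 0"
  using wallis_pos[of m] by simp

lemma wallis_Suc_mult: "wallis (Suc k) * (2 * real k + 2) = wallis k * (2 * real k + 1)"
  by (simp add: field_simps)

lemma wallis_ratio: "wallis k / wallis (Suc k) = (2 * real k + 2) / (2 * real k + 1)"
proof -
  have "2 * real k + 1 \<noteq> 0"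
    by (simp add: add_nonneg_eq_0_iff)
  then show ?thesis
    using wallis_Suc_mult[of k] by (simp add: frac_eq_eq mult.commute del: wallis.simps)
qed

lemma has_integral_derivative_periodic:
  fixes F F' :: "real \<Rightarrow> real"
  assumes "\<And>v. (F has_real_derivative F' v) (at v)" and "F 1 = F 0"
  shows "(F' has_integral 0) {0..1}"
proof -
  have "(F' has_integral (F 1 - F 0)) {0..1}"
    by (rule fundamental_theorem_of_calculus)
       (auto intro: assms(1) has_field_derivative_at_within
         simp: has_real_derivative_iff_has_vector_derivative[symmetric])
  then show ?thesis
    using assms(2) by simp
qed

lemma has_integral_cos_power:
  "((\<lambda>v. cos (pi * (v - s)) ^ (2 * m)) has_integral wallis m) {0..1}"
proof (induction m)
  case 0
  then show ?case
    using has_integral_const_real[of "1::real" 0 1] by simp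
next
  case (Suc m)
  define c where "c v = cos (pi * (v - s))" for v
  define F where "F v = c v ^ (2 * m + 1) * sin (pi * (v - s))" for v
  define F' where "F' v = pi * ((2 * real m + 2) * c v ^ (2 * m + 2) - (2 * real m + 1) * c v ^ (2 * m))" for v
  have "(F has_real_derivative F' v) (at v)" for v
  proof -
    have "((\<lambda>v. c v ^ (2 * m + 1)) has_real_derivative
        (2 * real m + 1) * (- sin (pi * (v - s)) * pi * c v ^ (2 * m))) (at v)"
    proof -
      have "(c has_real_derivative - sin (pi * (v - s)) * pi) (at v)"
        unfolding c_def[abs_def] by (auto intro!: derivative_eq_intros)
      from DERIV_power[OF this, of "2 * m + 1"] show ?thesis
        by (simp add: algebra_simps)
    qed
    moreover have "((\<lambda>v. sin (pi * (v - s))) has_real_derivative c v * pi) (at v)"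
      unfolding c_def by (auto intro!: derivative_eq_intros)
    ultimately have "(F has_real_derivative
        (2 * real m + 1) * (- sin (pi * (v - s)) * pi * c v ^ (2 * m)) * sin (pi * (v - s))
        + c v * pi * c v ^ (2 * m + 1)) (at v)"
      unfolding F_def[abs_def] by (rule DERIV_mult)
    moreover have "(2 * real m + 1) * (- S * pi * P) * S + C * pi * (P * C)
        = pi * ((2 * real m + 2) * (P * C\<^sup>2) - (2 * real m + 1) * P)"
      if "S\<^sup>2 = 1 - C\<^sup>2" for S C P :: real
      using that by algebra
    from this[of "sin (pi * (v - s))" "c v" "c v ^ (2 * m)"]
    have "(2 * real m + 1) * (- sin (pi * (v - s)) * pi * c v ^ (2 * m)) * sin (pi * (v - s))
        + c v * pi * c v ^ (2 * m + 1) = F' v"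
      unfolding F'_def power_add by (simp add: c_def sin_squared_eq algebra_simps)
    ultimately show ?thesis
      by simp
  qed
  moreover have "F 1 = F 0"
    using cos_periodic_pi[of "- pi * s"] sin_periodic_pi[of "- pi * s"]
    by (simp add: F_def c_def algebra_simps)
  ultimately have "(F' has_integral 0) {0..1}"
    by (rule has_integral_derivative_periodic)
  then have "((\<lambda>v. (F' v / pi + (2 * real m + 1) * c v ^ (2 * m)) / (2 * real m + 2)) has_integral
      ((0 / pi + (2 * real m + 1) * wallis m) / (2 * real m + 2))) {0..1}"
    by (intro has_integral_divide has_integral_add has_integral_mult_right Suc[folded c_def])
  moreover have "(F' v / pi + (2 * real m + 1) * c v ^ (2 * m)) / (2 * real m + 2) = c v ^ (2 * Suc m)" for v
  proof -
    have "F' v / pi + (2 * real m + 1) * c v ^ (2 * m) = (2 * real m + 2) * c v ^ (2 * Suc m)"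
      by (simp add: F'_def)
    moreover have "2 * real m + 2 \<noteq> 0"
      by (simp add: add_nonneg_eq_0_iff)
    ultimately show ?thesis
      by simp
  qed
  ultimately show ?case
    by (simp add: c_def algebra_simps)
qed

lemma has_real_derivative_shift:
  assumes "\<And>u. (f has_real_derivative f' u) (at u)"
  shows "((\<lambda>v. f (v - s)) has_real_derivative f' (v - s)) (at v)"
  using DERIV_shift[of f "f' (v - s)" v "- s"] assms by simp

text \<open>The kernels are normalised powers of \<open>cos (pi * v)\<close> and their first two derivatives; for
  \<open>n = 0\<close> the truncated exponents in \<open>bump'\<close> and \<open>bump''\<close> are harmless because the prefactor vanishes.\<close>

definition bump :: "nat \<Rightarrow> real \<Rightarrow> real" where
  "bump n v = cos (pi * v) ^ (2 * n) / wallis n"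

definition bump' :: "nat \<Rightarrow> real \<Rightarrow> real" where
  "bump' n v = - (2 * n * pi / wallis n) * (cos (pi * v) ^ (2 * n - 1) * sin (pi * v))"

definition bump'' :: "nat \<Rightarrow> real \<Rightarrow> real" where
  "bump'' n v = (2 * n * pi ^ 2 / wallis n)
     * ((2 * n - 1) * sin (pi * v) ^ 2 * cos (pi * v) ^ (2 * n - 2) - cos (pi * v) ^ (2 * n))"

text \<open>1-periodic substitutes for the distance of \<open>v\<close> to the nearest integer and for \<open>v\<close> itself near \<open>0\<close>.\<close>

definition sin_dist :: "real \<Rightarrow> real" where
  "sin_dist v = \<bar>sin (pi * v)\<bar>"

definition saw :: "real \<Rightarrow> real" where
  "saw v = sin (2 * pi * v) / (2 * pi)"

lemma has_real_derivative_cos_pi: "((\<lambda>v. cos (pi * v)) has_real_derivative - sin (pi * v) * pi) (at v)"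
  by (auto intro!: derivative_eq_intros)

lemma bump_has_derivative: "(bump n has_real_derivative bump' n v) (at v)"
proof -
  have "(bump n has_real_derivative
      of_nat (2 * n) * ((- sin (pi * v) * pi) * cos (pi * v) ^ (2 * n - Suc 0)) / wallis n) (at v)"
    unfolding bump_def[abs_def]
    by (intro DERIV_cdivide DERIV_power has_real_derivative_cos_pi)
  then show ?thesis
    by (simp add: bump'_def mult_ac)
qed

lemma bump'_has_derivative: "(bump' n has_real_derivative bump'' n v) (at v)"
proof (cases n)
  case 0
  then show ?thesis
    by (simp add: bump'_def[abs_def] bump''_def)
next
  case (Suc k)
  define C where "C = 2 * real n * pi / wallis n"
  have exp: "2 * n - 1 = 2 * k + 1"
    using Suc by simp
  have "((\<lambda>v. sin (pi * v)) has_real_derivative cos (pi * v) * pi) (at v)"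
    by (auto intro!: derivative_eq_intros)
  then have deriv: "(bump' n has_real_derivative - C * (of_nat (2 * k + 1) * ((- sin (pi * v) * pi)
      * cos (pi * v) ^ (2 * k + 1 - Suc 0)) * sin (pi * v) + cos (pi * v) * pi * cos (pi * v) ^ (2 * k + 1))) (at v)"
    unfolding bump'_def[abs_def] C_def[symmetric] exp
    by (intro DERIV_cmult DERIV_mult DERIV_power has_real_derivative_cos_pi)
  have bump'': "bump'' n v = pi * C * ((2 * real k + 1) * sin (pi * v) ^ 2 * cos (pi * v) ^ (2 * k)
      - cos (pi * v) ^ 2 * cos (pi * v) ^ (2 * k))"
  proof -
    have "2 * n - 2 = 2 * k" "2 * real n - 1 = 2 * real k + 1" "2 * n = 2 + 2 * k"
      using Suc by auto
    then show ?thesis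
      unfolding bump''_def C_def by (simp only: power_add) (simp add: power2_eq_square)
  qed
  show ?thesis
    unfolding bump'' using deriv by (simp add: power2_eq_square algebra_simps)
qed

lemma bump_periodic: "bump n (v + 1) = bump n v"
proof -
  have "pi * (v + 1) = pi * v + pi"
    by (simp add: algebra_simps)
  then show ?thesis
    by (simp add: bump_def power_mult)
qed

lemma bump'_periodic: "bump' n (v + 1) = bump' n v"
proof (cases n)
  case 0
  then show ?thesis
    by (simp add: bump'_def)
next
  case (Suc k)
  have "pi * (v + 1) = pi * v + pi"
    by (simp add: algebra_simps)
  moreover have "2 * n - 1 = Suc (2 * k)"
    using Suc by simp
  ultimately show ?thesis
    by (simp add: bump'_def)
qed

lemma periodic_sin_dist: "periodic_fun_simple' sin_dist"
proof
  have "pi * (v + 1) = pi * v + pi" for v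
    by (simp add: algebra_simps)
  then show "sin_dist (v + 1) = sin_dist v" for v
    by (simp add: sin_dist_def)
qed

lemma periodic_saw: "periodic_fun_simple' saw"
proof
  have "2 * pi * (v + 1) = 2 * pi * v + 2 * pi" for v
    by (simp add: algebra_simps)
  then show "saw (v + 1) = saw v" for v
    by (simp add: saw_def)
qed

lemma continuous_on_bump: "continuous_on UNIV (bump n)"
  unfolding bump_def[abs_def] by (intro continuous_intros) auto

lemma continuous_on_bump': "continuous_on UNIV (bump' n)"
  unfolding bump'_def[abs_def] by (intro continuous_intros)

lemma continuous_on_bump'': "continuous_on UNIV (bump'' n)"
  unfolding bump''_def[abs_def] by (intro continuous_intros)

lemma continuous_on_sin_dist: "continuous_on UNIV sin_dist"
  unfolding sin_dist_def[abs_def] by (intro continuous_intros)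

lemma continuous_on_saw: "continuous_on UNIV saw"
  unfolding saw_def[abs_def] by (intro continuous_intros) auto

lemma bump_nonneg: "0 \<le> bump n v"
  by (simp add: bump_def wallis_pos less_imp_le power_mult)

lemma has_integral_bump: "((\<lambda>v. bump n (v - s)) has_integral 1) {0..1}"
  using has_integral_divide[OF has_integral_cos_power, of s n "wallis n"] by (simp add: bump_def)

lemma has_integral_bump': "((\<lambda>v. bump' n (v - s)) has_integral 0) {0..1}"
  by (rule has_integral_derivative_periodic[OF has_real_derivative_shift[OF bump_has_derivative]])
     (use bump_periodic[of n "- s"] in simp)

lemma has_integral_bump'': "((\<lambda>v. bump'' n (v - s)) has_integral 0) {0..1}"
  by (rule has_integral_derivative_periodic[OF has_real_derivative_shift[OF bump'_has_derivative]])
     (use bump'_periodic[of n "- s"] in simp)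

lemma has_integral_saw_bump: "((\<lambda>v. saw (v - s) * bump n (v - s)) has_integral 0) {0..1}"
proof -
  define G where "G u = - (cos (pi * u) ^ (2 * n + 2)) / ((2 * n + 2) * pi ^ 2 * wallis n)" for u
  have "(G has_real_derivative saw u * bump n u) (at u)" for u
  proof -
    have "(G has_real_derivative - (of_nat (2 * n + 2) * ((- sin (pi * u) * pi) * cos (pi * u) ^ (2 * n + 2 - Suc 0)))
        / ((2 * n + 2) * pi ^ 2 * wallis n)) (at u)"
      unfolding G_def[abs_def] by (intro DERIV_cdivide DERIV_minus DERIV_power has_real_derivative_cos_pi)
    also have "- (of_nat (2 * n + 2) * ((- sin (pi * u) * pi) * cos (pi * u) ^ (2 * n + 2 - Suc 0)))
        / ((2 * n + 2) * pi ^ 2 * wallis n)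
      = (2 * real n + 2) * (sin (pi * u) * pi * cos (pi * u) ^ Suc (2 * n)) / ((2 * real n + 2) * (pi ^ 2 * wallis n))"
      by (simp add: mult.assoc)
    also have "\<dots> = sin (pi * u) * pi * cos (pi * u) ^ Suc (2 * n) / (pi ^ 2 * wallis n)"
      by (rule mult_divide_mult_cancel_left) (simp add: add_nonneg_eq_0_iff)
    also have "\<dots> = saw u * bump n u"
    proof -
      have "sin (2 * pi * u) = 2 * sin (pi * u) * cos (pi * u)"
        using sin_double[of "pi * u"] by (simp add: mult.assoc)
      then show ?thesis
        by (simp add: saw_def bump_def field_simps power2_eq_square)
    qed
    finally show ?thesis .
  qed
  then have "((\<lambda>v. G (v - s)) has_real_derivative saw (v - s) * bump n (v - s)) (at v)" for v
    by (rule has_real_derivative_shift)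
  moreover have "G (1 - s) = G (0 - s)"
  proof -
    have "pi * (1 - s) = pi * (- s) + pi"
      by (simp add: algebra_simps)
    then show ?thesis
      by (simp add: G_def power_mult)
  qed
  ultimately show ?thesis
    by (rule has_integral_derivative_periodic)
qed

lemma has_integral_sin2_cos_power:
  "((\<lambda>v. sin (pi * (v - s)) ^ 2 * cos (pi * (v - s)) ^ (2 * k)) has_integral wallis k / (2 * real k + 2)) {0..1}"
proof -
  have "sin (pi * (v - s)) ^ 2 * cos (pi * (v - s)) ^ (2 * k)
      = cos (pi * (v - s)) ^ (2 * k) - cos (pi * (v - s)) ^ (2 * Suc k)" for v
    unfolding sin_squared_eq mult_Suc_right power_add by (simp add: algebra_simps)
  moreover have "wallis k - wallis (Suc k) = wallis k / (2 * real k + 2)"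
    by (simp add: field_simps)
  ultimately show ?thesis
    using has_integral_diff[OF has_integral_cos_power has_integral_cos_power, of s k s "Suc k"] by simp
qed

lemma has_integral_sin4_cos_power:
  "((\<lambda>v. sin (pi * (v - s)) ^ 4 * cos (pi * (v - s)) ^ (2 * k))
     has_integral 3 * wallis k / ((2 * real k + 2) * (2 * real k + 4))) {0..1}"
proof -
  have "sin (pi * (v - s)) ^ 4 * cos (pi * (v - s)) ^ (2 * k)
      = cos (pi * (v - s)) ^ (2 * k) - 2 * cos (pi * (v - s)) ^ (2 * Suc k) + cos (pi * (v - s)) ^ (2 * Suc (Suc k))" for v
  proof -
    define c where "c = cos (pi * (v - s))"
    have sin4: "sin (pi * (v - s)) ^ 4 = (1 - c ^ 2) ^ 2"
      unfolding c_def by (simp flip: sin_squared_eq power_mult)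
    have "c ^ (2 * Suc k) = c ^ 2 * c ^ (2 * k)" "c ^ (2 * Suc (Suc k)) = c ^ 2 * (c ^ 2 * c ^ (2 * k))"
      by (simp_all only: mult_Suc_right power_add)
    then show ?thesis
      unfolding sin4 c_def[symmetric] by (simp add: power2_eq_square algebra_simps)
  qed
  moreover have "wallis k - 2 * wallis (Suc k) + wallis (Suc (Suc k))
      = 3 * wallis k / ((2 * real k + 2) * (2 * real k + 4))"
  proof -
    have nz: "2 * real k + 2 \<noteq> 0" "2 * real k + 4 \<noteq> 0"
      by (simp_all add: add_nonneg_eq_0_iff)
    have "(wallis k - 2 * wallis (Suc k) + wallis (Suc (Suc k))) * ((2 * real k + 2) * (2 * real k + 4))
        = 3 * wallis k"
    proof -
      have "wallis (Suc (Suc k)) * (2 * real k + 4) = wallis (Suc k) * (2 * real k + 3)"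
        using wallis_Suc_mult[of "Suc k"] by (simp add: algebra_simps del: wallis.simps)
      with wallis_Suc_mult[of k] show ?thesis
        by algebra
    qed
    moreover have "(2 * real k + 2) * (2 * real k + 4) \<noteq> 0"
      using nz by simp
    ultimately show ?thesis
      by (metis nonzero_mult_div_cancel_right)
  qed
  ultimately show ?thesis
    using has_integral_add[OF has_integral_diff[OF has_integral_cos_power
        has_integral_mult_right[OF has_integral_cos_power]] has_integral_cos_power,
        of s k 2 s "Suc k" s "Suc (Suc k)"]
    by simp
qed

lemma continuous_on_shift:
  fixes p :: "real \<Rightarrow> real"
  assumes "continuous_on UNIV p"
  shows "continuous_on UNIV (\<lambda>v. p (v - s))"
  by (rule continuous_on_compose2[OF assms]) (auto intro!: continuous_intros)

lemma continuous_on_sin_dist_powr: "0 < r \<Longrightarrow> continuous_on UNIV (\<lambda>v. sin_dist (v - s) powr r)"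
  unfolding sin_dist_def by (intro continuous_on_powr' continuous_intros) auto

lemma powr_le_two_scales:
  fixes y r e :: real
  assumes "0 \<le> y" "0 < r" "r \<le> 2" "0 < e"
  shows "y powr r \<le> e powr r + e powr (r - 2) * y ^ 2"
proof (cases "y \<le> e")
  case True
  then have "y powr r \<le> e powr r"
    using assms by (intro powr_mono2) auto
  then show ?thesis
    by (simp add: add_increasing2)
next
  case False
  have "y powr r = y powr (r - 2) * y powr 2"
    by (subst powr_add[symmetric]) simp
  also have "y powr 2 = y ^ 2"
    using False assms by simp
  also have "y powr (r - 2) * y ^ 2 \<le> e powr (r - 2) * y ^ 2"
    using assms False by (intro mult_right_mono powr_mono2') auto
  finally show ?thesis
    by (simp add: add_increasing)
qed

lemma integral_sin_dist_weight_le: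
  fixes F P :: "real \<Rightarrow> real"
  assumes r: "0 < r" "r \<le> 2" and m: "0 < m"
    and cont: "continuous_on UNIV F" "continuous_on UNIV P"
    and P: "\<And>v. 0 \<le> P v" and F: "\<And>v. F v \<le> sin_dist (v - s) powr r * P v"
  shows "integral {0..1} F \<le> m powr (- r / 2)
    * (integral {0..1} P + m * integral {0..1} (\<lambda>v. sin (pi * (v - s)) ^ 2 * P v))"
proof -
  define e where "e = m powr (- 1 / 2)"
  have e: "0 < e" "e powr r = m powr (- r / 2)" "e powr (r - 2) = m powr (- r / 2) * m"
  proof -
    show "0 < e" "e powr r = m powr (- r / 2)"
      using m by (simp_all add: e_def powr_powr)
    have "- 1 / 2 * (r - 2) = - r / 2 + 1"
      by (simp add: field_simps)
    then have "e powr (r - 2) = m powr (- r / 2 + 1)"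
      unfolding e_def powr_powr by simp
    then show "e powr (r - 2) = m powr (- r / 2) * m"
      unfolding powr_add using m by simp
  qed
  define R where "R v = m powr (- r / 2) * (P v + m * (sin (pi * (v - s)) ^ 2 * P v))" for v
  have "F v \<le> R v" for v
  proof -
    have "sin_dist (v - s) powr r \<le> e powr r + e powr (r - 2) * sin (pi * (v - s)) ^ 2"
      using powr_le_two_scales[of "sin_dist (v - s)" r e] r e by (simp add: sin_dist_def)
    then have "sin_dist (v - s) powr r * P v \<le> (e powr r + e powr (r - 2) * sin (pi * (v - s)) ^ 2) * P v"
      by (rule mult_right_mono) (rule P)
    then show ?thesis
      using F[of v] by (simp add: R_def e algebra_simps)
  qed
  moreover have "(R has_integral m powr (- r / 2)
      * (integral {0..1} P + m * integral {0..1} (\<lambda>v. sin (pi * (v - s)) ^ 2 * P v))) {0..1}"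
  proof -
    have "continuous_on {0..1} (\<lambda>v. sin (pi * (v - s)) ^ 2 * P v)"
      by (intro continuous_intros continuous_on_subset[OF cont(2)]) auto
    then have S: "((\<lambda>v. sin (pi * (v - s)) ^ 2 * P v) has_integral
        integral {0..1} (\<lambda>v. sin (pi * (v - s)) ^ 2 * P v)) {0..1}"
      by (intro integrable_integral integrable_continuous_interval)
    have "(P has_integral integral {0..1} P) {0..1}"
      by (intro integrable_integral integrable_continuous_interval continuous_on_subset[OF cont(2)]) auto
    from has_integral_mult_right[OF has_integral_add[OF this has_integral_mult_right[OF S, of m]]]
    show ?thesis
      unfolding R_def .
  qed
  moreover have "(F has_integral integral {0..1} F) {0..1}"
    by (intro integrable_integral integrable_continuous_interval continuous_on_subset[OF cont(1)]) auto
  ultimately show ?thesis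
    using has_integral_le by blast
qed

lemma bump_moment_le:
  assumes "0 < r" "r \<le> 2"
  shows "integral {0..1} (\<lambda>v. sin_dist (v - s) powr r * bump n (v - s)) \<le> 2 * (2 * real n + 2) powr (- r / 2)"
proof -
  define m where "m = 2 * real n + 2"
  have m: "0 < m"
    by (simp add: m_def add_nonneg_pos)
  have "integral {0..1} (\<lambda>v. sin_dist (v - s) powr r * bump n (v - s))
      \<le> m powr (- r / 2) * (integral {0..1} (\<lambda>v. bump n (v - s))
        + m * integral {0..1} (\<lambda>v. sin (pi * (v - s)) ^ 2 * bump n (v - s)))"
    using assms m bump_nonneg
    by (intro integral_sin_dist_weight_le continuous_on_mult continuous_on_sin_dist_powr
        continuous_on_shift continuous_on_bump) auto
  also have "integral {0..1} (\<lambda>v. bump n (v - s)) = 1"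
    by (rule integral_unique[OF has_integral_bump])
  also have "integral {0..1} (\<lambda>v. sin (pi * (v - s)) ^ 2 * bump n (v - s)) = 1 / m"
  proof -
    have "((\<lambda>v. sin (pi * (v - s)) ^ 2 * bump n (v - s)) has_integral (wallis n / m) / wallis n) {0..1}"
      unfolding bump_def m_def times_divide_eq_right
      by (intro has_integral_divide has_integral_sin2_cos_power)
    then show ?thesis
      by (simp add: integral_unique)
  qed
  finally show ?thesis
    using m by (simp add: m_def)
qed

lemma bump'_moment_le:
  assumes "0 < r" "r \<le> 1"
  shows "integral {0..1} (\<lambda>v. sin_dist (v - s) powr r * \<bar>bump' n (v - s)\<bar>)
    \<le> 6 * pi * (2 * real n + 2) powr ((1 - r) / 2)"
proof (cases n)
  case 0
  then show ?thesis
    by (simp add: bump'_def)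
next
  case (Suc k)
  define m where "m = 2 * real n + 2"
  define C where "C = 2 * real n * pi / wallis n"
  define P where "P v = C * cos (pi * (v - s)) ^ (2 * k)" for v
  have m: "0 < m"
    by (simp add: m_def add_nonneg_pos)
  have C: "0 \<le> C"
    by (simp add: C_def wallis_pos less_imp_le)
  have pointwise: "sin_dist (v - s) powr r * \<bar>bump' n (v - s)\<bar> \<le> sin_dist (v - s) powr (r + 1) * P v" for v
  proof -
    define c where "c = cos (pi * (v - s))"
    have "2 * n - 1 = 2 * k + 1"
      using Suc by simp
    then have "\<bar>bump' n (v - s)\<bar> = C * (\<bar>c\<bar> ^ (2 * k) * \<bar>c\<bar> * sin_dist (v - s))"
      using wallis_pos[of n] by (simp add: bump'_def C_def c_def sin_dist_def abs_mult power_abs mult_ac)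
    also have "\<dots> \<le> C * (\<bar>c\<bar> ^ (2 * k) * 1 * sin_dist (v - s))"
      using C by (intro mult_left_mono mult_right_mono) (auto simp: c_def sin_dist_def)
    also have "\<dots> = sin_dist (v - s) * P v"
      by (simp add: P_def c_def power_mult power_abs[symmetric])
    finally have "sin_dist (v - s) powr r * \<bar>bump' n (v - s)\<bar> \<le> sin_dist (v - s) powr r * (sin_dist (v - s) * P v)"
      by (simp add: mult_left_mono)
    also have "\<dots> = sin_dist (v - s) powr (r + 1) * P v"
      by (simp add: powr_add sin_dist_def)
    finally show ?thesis .
  qed
  have "integral {0..1} (\<lambda>v. sin_dist (v - s) powr r * \<bar>bump' n (v - s)\<bar>)
      \<le> m powr (- (r + 1) / 2) * (integral {0..1} P + m * integral {0..1} (\<lambda>v. sin (pi * (v - s)) ^ 2 * P v))"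
  proof (rule integral_sin_dist_weight_le)
    show "0 < r + 1" "r + 1 \<le> 2"
      using assms by auto
    show "continuous_on UNIV (\<lambda>v. sin_dist (v - s) powr r * \<bar>bump' n (v - s)\<bar>)"
      by (intro continuous_on_mult continuous_on_sin_dist_powr continuous_on_rabs continuous_on_shift
          continuous_on_bump' assms(1))
    show "continuous_on UNIV P"
      unfolding P_def by (intro continuous_intros)
    show "0 \<le> P v" for v
      using C by (simp add: P_def power_mult)
  qed (use m pointwise in auto)
  also have "integral {0..1} P = C * wallis k"
    unfolding P_def by (intro integral_unique has_integral_mult_right has_integral_cos_power)
  also have "integral {0..1} (\<lambda>v. sin (pi * (v - s)) ^ 2 * P v) = C * (wallis k / (2 * real k + 2))"
    unfolding P_def mult.left_commute[of _ C]
    by (intro integral_unique has_integral_mult_right has_integral_sin2_cos_power)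
  also have "m powr (- (r + 1) / 2) * (C * wallis k + m * (C * (wallis k / (2 * real k + 2))))
      \<le> m powr (- (r + 1) / 2) * (6 * pi * m)"
  proof -
    define \<rho> where "\<rho> = wallis k / wallis (Suc k)"
    have \<rho>: "0 \<le> \<rho>" "\<rho> \<le> 2"
      unfolding \<rho>_def wallis_ratio by (simp_all add: divide_le_eq)
    have nz: "2 * real k + 2 \<noteq> 0"
      by (simp add: add_nonneg_eq_0_iff)
    have Cw: "C * wallis k = (2 * real k + 2) * (pi * \<rho>)"
      by (simp add: C_def \<rho>_def Suc algebra_simps add_divide_distrib del: wallis.simps)
    then have C\<rho>: "C * (wallis k / (2 * real k + 2)) = pi * \<rho>"
      using nz by simp
    have \<pi>\<rho>: "pi * \<rho> \<le> 2 * pi"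
      using mult_left_mono[OF \<rho>(2), of pi] by (simp add: mult.commute)
    have "(2 * real k + 2) * (pi * \<rho>) \<le> m * (2 * pi)"
      by (rule mult_mono) (use \<pi>\<rho> \<rho> in \<open>auto simp: m_def Suc\<close>)
    moreover have "m * (pi * \<rho>) \<le> m * (2 * pi)"
      by (rule mult_left_mono[OF \<pi>\<rho>]) (use m in simp)
    moreover have "m * (2 * pi) \<le> 3 * (pi * m)"
      using m by simp
    ultimately have "C * wallis k + m * (C * (wallis k / (2 * real k + 2))) \<le> 6 * pi * m"
      unfolding Cw C\<rho> by linarith
    then show ?thesis
      by (simp add: mult_left_mono)
  qed
  also have "m powr (- (r + 1) / 2) * (6 * pi * m) = 6 * pi * m powr ((1 - r) / 2)"
  proof -
    have "(1 - r) / 2 = - (r + 1) / 2 + 1"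
      by (simp add: field_simps)
    then show ?thesis
      using m by (simp only: powr_add) simp
  qed
  finally show ?thesis
    by (simp add: m_def)
qed

lemma bump''_moment_le:
  assumes "0 < r" "r \<le> 2"
  shows "integral {0..1} (\<lambda>v. sin_dist (v - s) powr r * \<bar>bump'' n (v - s)\<bar>)
    \<le> 6 * pi ^ 2 * (2 * real n + 2) powr (1 - r / 2)"
proof (cases n)
  case 0
  then show ?thesis
    by (simp add: bump''_def)
next
  case (Suc k)
  define m where "m = 2 * real n + 2"
  define C where "C = 2 * real n * pi ^ 2 / wallis n"
  define P where "P v = C * ((2 * real k + 1) * (sin (pi * (v - s)) ^ 2 * cos (pi * (v - s)) ^ (2 * k))
      + cos (pi * (v - s)) ^ (2 * n))" for v
  have m: "0 < m"
    by (simp add: m_def add_nonneg_pos)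
  have C: "0 \<le> C"
    by (simp add: C_def wallis_pos less_imp_le)
  have P: "0 \<le> P v" for v
    using C by (simp add: P_def power_mult)
  have pointwise: "sin_dist (v - s) powr r * \<bar>bump'' n (v - s)\<bar> \<le> sin_dist (v - s) powr r * P v" for v
  proof -
    define A where "A = (2 * real k + 1) * (sin (pi * (v - s)) ^ 2 * cos (pi * (v - s)) ^ (2 * k))"
    define B where "B = cos (pi * (v - s)) ^ (2 * n)"
    have "2 * n - 2 = 2 * k" "2 * real n - 1 = 2 * real k + 1"
      using Suc by auto
    then have "bump'' n (v - s) = C * (A - B)"
      by (simp add: bump''_def C_def A_def B_def mult_ac)
    then have "\<bar>bump'' n (v - s)\<bar> = C * \<bar>A - B\<bar>"
      using C by (simp add: abs_mult)
    also have "\<dots> \<le> C * (A + B)"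
    proof -
      have "0 \<le> A" "0 \<le> B"
        by (simp_all add: A_def B_def power_mult)
      then show ?thesis
        using C by (intro mult_left_mono) auto
    qed
    finally have "\<bar>bump'' n (v - s)\<bar> \<le> P v"
      by (simp add: P_def A_def B_def)
    then show ?thesis
      by (simp add: mult_left_mono)
  qed
  have "integral {0..1} (\<lambda>v. sin_dist (v - s) powr r * \<bar>bump'' n (v - s)\<bar>)
      \<le> m powr (- r / 2) * (integral {0..1} P + m * integral {0..1} (\<lambda>v. sin (pi * (v - s)) ^ 2 * P v))"
  proof (rule integral_sin_dist_weight_le)
    show "continuous_on UNIV (\<lambda>v. sin_dist (v - s) powr r * \<bar>bump'' n (v - s)\<bar>)"
      by (intro continuous_on_mult continuous_on_sin_dist_powr continuous_on_rabs continuous_on_shift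
          continuous_on_bump'' assms(1))
    show "continuous_on UNIV P"
      unfolding P_def by (intro continuous_intros)
  qed (use assms m P pointwise in auto)
  also have "integral {0..1} P = C * ((2 * real k + 1) * (wallis k / (2 * real k + 2)) + wallis n)"
    unfolding P_def
    by (intro integral_unique has_integral_mult_right has_integral_add has_integral_sin2_cos_power
        has_integral_cos_power)
  also have "integral {0..1} (\<lambda>v. sin (pi * (v - s)) ^ 2 * P v)
      = C * ((2 * real k + 1) * (3 * wallis k / ((2 * real k + 2) * (2 * real k + 4)))
        + wallis n / (2 * real n + 2))"
  proof -
    have "sin (pi * (v - s)) ^ 2 * P v = C * ((2 * real k + 1) * (sin (pi * (v - s)) ^ 4 * cos (pi * (v - s)) ^ (2 * k))
        + sin (pi * (v - s)) ^ 2 * cos (pi * (v - s)) ^ (2 * n))" for v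
      by (simp add: P_def algebra_simps flip: power_add)
    then show ?thesis
      by (simp only:) (intro integral_unique has_integral_mult_right has_integral_add has_integral_sin4_cos_power
          has_integral_sin2_cos_power)
  qed
  also have W: "(2 * real k + 1) * (wallis k / (2 * real k + 2)) = wallis n"
    by (simp add: Suc algebra_simps)
  also have "(2 * real k + 1) * (3 * wallis k / ((2 * real k + 2) * (2 * real k + 4))) = 3 * wallis n / m"
    unfolding W[symmetric] by (simp add: m_def Suc mult_ac)
  also have "C * (wallis n + wallis n) = 2 * (C * wallis n)"
    by simp
  also have "C * (3 * wallis n / m + wallis n / (2 * real n + 2)) = 4 * (C * wallis n) / m"
    by (simp only: m_def[symmetric] add_divide_distrib[symmetric]) (simp add: mult_ac)
  also have "m powr (- r / 2) * (2 * (C * wallis n) + m * (4 * (C * wallis n) / m))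
      = m powr (- r / 2) * (12 * real n * pi ^ 2)"
    using m by (simp add: C_def)
  also have "\<dots> \<le> m powr (- r / 2) * (6 * pi ^ 2 * m)"
    by (intro mult_left_mono) (simp_all add: m_def)
  also have "m powr (- r / 2) * (6 * pi ^ 2 * m) = 6 * pi ^ 2 * m powr (1 - r / 2)"
  proof -
    have "1 - r / 2 = - r / 2 + 1"
      by simp
    then show ?thesis
      using m by (simp only: powr_add) simp
  qed
  finally show ?thesis
    by (simp add: m_def)
qed

inductive_set trig_poly :: "(real \<Rightarrow> real) set" where
  const: "(\<lambda>v. c) \<in> trig_poly"
| cos: "(\<lambda>v. cos (a * v + b)) \<in> trig_poly"
| sin: "(\<lambda>v. sin (a * v + b)) \<in> trig_poly"
| add: "p \<in> trig_poly \<Longrightarrow> q \<in> trig_poly \<Longrightarrow> (\<lambda>v. p v + q v) \<in> trig_poly"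
| mult: "p \<in> trig_poly \<Longrightarrow> q \<in> trig_poly \<Longrightarrow> (\<lambda>v. p v * q v) \<in> trig_poly"

lemma trig_poly_has_derivative:
  "p \<in> trig_poly \<Longrightarrow> \<exists>p'\<in>trig_poly. \<forall>v. (p has_real_derivative p' v) (at v)"
proof (induction rule: trig_poly.induct)
  case (const c)
  show ?case
    by (intro bexI[of _ "\<lambda>v. 0"] trig_poly.const) auto
next
  case (cos a b)
  have "(\<lambda>v. - a * sin (a * v + b)) \<in> trig_poly"
    by (intro trig_poly.mult trig_poly.const trig_poly.sin)
  then show ?case
    by (intro bexI[of _ "\<lambda>v. - a * sin (a * v + b)"]) (auto intro!: derivative_eq_intros)
next
  case (sin a b)
  have "(\<lambda>v. a * cos (a * v + b)) \<in> trig_poly"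
    by (intro trig_poly.mult trig_poly.const trig_poly.cos)
  then show ?case
    by (intro bexI[of _ "\<lambda>v. a * cos (a * v + b)"]) (auto intro!: derivative_eq_intros)
next
  case (add p q)
  then obtain p' q' where "p' \<in> trig_poly" "q' \<in> trig_poly"
    and "\<And>v. (p has_real_derivative p' v) (at v)" "\<And>v. (q has_real_derivative q' v) (at v)"
    by blast
  then show ?case
    by (intro bexI[of _ "\<lambda>v. p' v + q' v"] trig_poly.add allI DERIV_add)
next
  case (mult p q)
  then obtain p' q' where "p' \<in> trig_poly" "q' \<in> trig_poly"
    and "\<And>v. (p has_real_derivative p' v) (at v)" "\<And>v. (q has_real_derivative q' v) (at v)"
    by blast
  with mult.hyps show ?case
    by (intro bexI[of _ "\<lambda>v. p' v * q v + q' v * p v"] trig_poly.add trig_poly.mult allI DERIV_mult)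
qed

lemma continuous_on_fst_comp:
  "continuous_on UNIV p \<Longrightarrow> continuous_on UNIV (\<lambda>z :: real \<times> real. p (fst z))"
  by (rule continuous_on_compose2[of UNIV p]) (auto intro!: continuous_intros)

lemma continuous_on_snd_comp:
  "continuous_on UNIV q \<Longrightarrow> continuous_on UNIV (\<lambda>z :: real \<times> real. q (snd z))"
  by (rule continuous_on_compose2[of UNIV q]) (auto intro!: continuous_intros)

lemma smooth2_tensor:
  fixes K :: "(real \<Rightarrow> real) set"
  assumes K: "\<And>p. p \<in> K \<Longrightarrow> \<exists>p'\<in>K. \<forall>v. (p has_real_derivative p' v) (at v)"
    and "p \<in> K" "q \<in> K"
  shows "smooth2 (\<lambda>z. p (fst z) * q (snd z))"
proof -
  define S where "S = {\<lambda>z. p (fst z) * q (snd z) | p q. p \<in> K \<and> q \<in> K}"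
  have "continuous_on UNIV \<psi> \<and> has_part1 \<psi> \<and> has_part2 \<psi> \<and> part1 \<psi> \<in> S \<and> part2 \<psi> \<in> S"
    if "\<psi> \<in> S" for \<psi>
  proof -
    from that obtain p q where \<psi>: "\<psi> = (\<lambda>z. p (fst z) * q (snd z))" and "p \<in> K" "q \<in> K"
      unfolding S_def by blast
    from K[OF \<open>p \<in> K\<close>] obtain p' where "p' \<in> K" and p: "\<And>v. (p has_real_derivative p' v) (at v)"
      by blast
    from K[OF \<open>q \<in> K\<close>] obtain q' where "q' \<in> K" and q: "\<And>v. (q has_real_derivative q' v) (at v)"
      by blast
    have "continuous_on UNIV p" "continuous_on UNIV q"
      using p q by (auto intro!: continuous_at_imp_continuous_on DERIV_isCont)
    then have "continuous_on UNIV \<psi>"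
      unfolding \<psi> by (intro continuous_on_mult continuous_on_fst_comp continuous_on_snd_comp)
    moreover have d1: "((\<lambda>t. \<psi> (t, snd x)) has_real_derivative p' (fst x) * q (snd x)) (at (fst x))" for x
      unfolding \<psi> by (auto intro: DERIV_cmult_right p)
    moreover have d2: "((\<lambda>t. \<psi> (fst x, t)) has_real_derivative p (fst x) * q' (snd x)) (at (snd x))" for x
      unfolding \<psi> by (auto intro: DERIV_cmult q)
    moreover have "part1 \<psi> = (\<lambda>z. p' (fst z) * q (snd z))" "part2 \<psi> = (\<lambda>z. p (fst z) * q' (snd z))"
      unfolding part1_def part2_def using d1 d2 by (auto intro!: DERIV_imp_deriv)
    ultimately show ?thesis
      unfolding has_part1_def has_part2_def S_def real_differentiable_def
      using \<open>p \<in> K\<close> \<open>q \<in> K\<close> \<open>p' \<in> K\<close> \<open>q' \<in> K\<close> by blast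
  qed
  moreover have "(\<lambda>z. p (fst z) * q (snd z)) \<in> S"
    using assms by (auto simp: S_def)
  ultimately show ?thesis
    unfolding smooth2_def by blast
qed

lemma bump_shift_trig_poly: "(\<lambda>v. bump n (v - s)) \<in> trig_poly"
proof -
  have "(\<lambda>v. 1 / wallis n * cos (pi * v + - pi * s) ^ (2 * n)) \<in> trig_poly"
  proof (intro trig_poly.mult trig_poly.const)
    show "(\<lambda>v. cos (pi * v + - pi * s) ^ k) \<in> trig_poly" for k
    proof (induction k)
      case 0
      show ?case
        using trig_poly.const[of 1] by simp
    next
      case (Suc k)
      show ?case
        using trig_poly.mult[OF trig_poly.cos[of pi "- pi * s"] Suc.IH] by simp
    qed
  qed
  then show ?thesis
    by (simp add: bump_def algebra_simps)
qed

definition bump2 :: "nat \<Rightarrow> nat \<Rightarrow> real \<times> real \<Rightarrow> real \<times> real \<Rightarrow> real" where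
  "bump2 n1 n2 x z = bump n1 (fst z - fst x) * bump n2 (snd z - snd x)"

lemma smooth2_bump2: "smooth2 (bump2 n1 n2 x)"
  using smooth2_tensor[OF trig_poly_has_derivative bump_shift_trig_poly bump_shift_trig_poly]
  by (simp add: bump2_def[abs_def])

lemma periodic2_bump2: "periodic2 (bump2 n1 n2 x)"
  by (simp add: periodic2_def bump2_def bump_periodic flip: diff_add_eq)

lemma part1_bump2: "part1 (bump2 n1 n2 x) = (\<lambda>z. bump' n1 (fst z - fst x) * bump n2 (snd z - snd x))"
  unfolding part1_def bump2_def fst_conv snd_conv
  by (intro ext DERIV_imp_deriv DERIV_cmult_right has_real_derivative_shift bump_has_derivative)

lemma part2_bump2: "part2 (bump2 n1 n2 x) = (\<lambda>z. bump n1 (fst z - fst x) * bump' n2 (snd z - snd x))"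
  unfolding part2_def bump2_def fst_conv snd_conv
  by (intro ext DERIV_imp_deriv DERIV_cmult has_real_derivative_shift bump_has_derivative)

lemma part1_part1_bump2: "part1 (part1 (bump2 n1 n2 x)) = (\<lambda>z. bump'' n1 (fst z - fst x) * bump n2 (snd z - snd x))"
  unfolding part1_bump2 unfolding part1_def fst_conv snd_conv
  by (intro ext DERIV_imp_deriv DERIV_cmult_right has_real_derivative_shift bump'_has_derivative)

lemma bump2_0_0: "bump2 0 0 x = (\<lambda>z. 1)"
  unfolding bump2_def[abs_def] bump_def by simp

lemma integral_tensor:
  fixes p q :: "real \<Rightarrow> real"
  assumes "continuous_on UNIV p" "continuous_on UNIV q"
  shows "integral unitsq (\<lambda>z. p (fst z) * q (snd z)) = integral {0..1} p * integral {0..1} q"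
proof -
  have "continuous_on UNIV (\<lambda>z. p (fst z) * q (snd z))"
    using assms by (intro continuous_on_mult continuous_on_fst_comp continuous_on_snd_comp)
  then have "continuous_on unitsq (\<lambda>z. p (fst z) * q (snd z))"
    by (rule continuous_on_subset) simp
  then have "integral unitsq (\<lambda>z. p (fst z) * q (snd z)) = integral (cbox 0 1) (\<lambda>x. integral (cbox 0 1) (\<lambda>y. p x * q y))"
    using integral_prod_continuous by fastforce
  then show ?thesis
    by (simp add: cbox_interval)
qed

lemma integral_bump2: "integral unitsq (bump2 n1 n2 x) = 1"
  using integral_tensor[OF continuous_on_shift continuous_on_shift, OF continuous_on_bump continuous_on_bump]
  by (simp add: bump2_def[abs_def] integral_unique[OF has_integral_bump])

lemma holder_quot_nonneg: "0 \<le> holder_quot \<theta> f x y"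
  unfolding holder_quot_def by simp

lemma holder_bound_nonneg:
  assumes "\<And>x y. x \<noteq> y \<Longrightarrow> holder_quot \<theta> f x y \<le> A"
  shows "0 \<le> A"
  using holder_quot_nonneg assms[of "(0, 0)" "(1, 0)"] by (rule order_trans) simp

lemma holder_quot_le_holder_sn:
  assumes "holder_fin \<theta> f" and "x \<noteq> y"
  shows "holder_quot \<theta> f x y \<le> holder_sn \<theta> f"
  unfolding holder_sn_def
proof (rule cSup_upper)
  show "holder_quot \<theta> f x y \<in> {holder_quot \<theta> f x y | x y. x \<noteq> y}"
    using assms(2) by blast
  show "bdd_above {holder_quot \<theta> f x y | x y. x \<noteq> y}"
    using assms(1) by (simp add: holder_fin_def)
qed

lemma holder_sn_nonneg: "holder_fin \<theta> f \<Longrightarrow> 0 \<le> holder_sn \<theta> f"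
  by (rule holder_bound_nonneg) (rule holder_quot_le_holder_sn)

lemma dT_pos: "x \<noteq> y \<Longrightarrow> 0 < dT y x"
  unfolding dT_def by (cases x, cases y) (auto simp: add_pos_nonneg add_nonneg_pos)

definition holder_incr :: "real \<Rightarrow> (real \<times> real \<Rightarrow> real) \<Rightarrow> real \<times> real \<Rightarrow> real \<times> real \<Rightarrow> real" where
  "holder_incr a f x y = (if a \<le> 1 then \<bar>f y - f x\<bar> else \<bar>f y - f x - part1 f x * (fst y - fst x)\<bar>)"

lemma holder_quot_le_iff:
  assumes "x \<noteq> y"
  shows "holder_quot a f x y \<le> M \<longleftrightarrow> holder_incr a f x y \<le> M * dT y x powr a"
  using dT_pos[OF assms] unfolding holder_quot_def holder_incr_def by (simp add: divide_le_eq)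

lemma periodic2_plus_of_int:
  assumes "periodic2 f"
  shows "f (a + of_int m, b + of_int k) = f (a, b)"
proof -
  interpret fst: periodic_fun_simple' "\<lambda>a. f (a, b + of_int k)"
    using assms by unfold_locales (simp add: periodic2_def)
  interpret snd: periodic_fun_simple' "\<lambda>b. f (a, b)"
    using assms by unfold_locales (simp add: periodic2_def)
  show ?thesis
    using fst.plus_of_int snd.plus_of_int by simp
qed

lemma holder_part1_bound:
  assumes "periodic2 f" and "\<And>x y. x \<noteq> y \<Longrightarrow> holder_quot \<theta> f x y \<le> A" and "1 < \<theta>"
  shows "\<bar>part1 f x\<bar> \<le> A"
proof -
  define y where "y = (fst x + 1, snd x)"
  have "x \<noteq> y" "dT y x = 1" "f y = f x"
    using assms(1) by (auto simp: y_def dT_def periodic2_def prod_eq_iff)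
  with assms(2)[of x y] assms(3) show ?thesis
    by (simp add: holder_quot_le_iff holder_incr_def y_def)
qed

lemma abs_sin_minus_le: "\<bar>sin x - x\<bar> \<le> \<bar>x :: real\<bar> ^ 3 / 6"
proof -
  have "\<bar>sin x - (\<Sum>m<3. sin_coeff m * x ^ m)\<bar> \<le> inverse (fact 3) * \<bar>x\<bar> ^ 3"
    by (rule Maclaurin_sin_bound)
  moreover have "(\<Sum>m<3. sin_coeff m * x ^ m) = x" "inverse (fact 3 :: real) = 1 / 6"
    by (simp_all add: numeral_3_eq_3 sin_coeff_def)
  ultimately show ?thesis
    by simp
qed

lemma abs_le_sin_dist:
  assumes "\<bar>u\<bar> \<le> 1 / 2"
  shows "\<bar>u\<bar> \<le> sin_dist u"
proof -
  define x where "x = pi * u"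
  have ax: "\<bar>x\<bar> = pi * \<bar>u\<bar>"
    by (simp add: x_def abs_mult)
  have "\<bar>x\<bar> \<le> 2"
    using assms pi_less_4 unfolding ax by (intro order_trans[OF mult_mono[of pi 4 "\<bar>u\<bar>" "1 / 2"]]) auto
  then have "\<bar>x\<bar> ^ 2 \<le> 2 ^ 2"
    by (intro power_mono) auto
  then have "\<bar>x\<bar> * (\<bar>x\<bar> ^ 2 / 6) \<le> \<bar>x\<bar> * (2 / 3)"
    by (intro mult_left_mono) auto
  then have "\<bar>x\<bar> ^ 3 / 6 \<le> \<bar>x\<bar> * (2 / 3)"
    by (simp add: power3_eq_cube power2_eq_square)
  with abs_sin_minus_le[of x] have "\<bar>x\<bar> / 3 \<le> \<bar>sin x\<bar>"
    by linarith
  moreover have "3 * \<bar>u\<bar> \<le> \<bar>x\<bar>"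
    unfolding ax using pi_gt3 by (intro mult_right_mono) auto
  ultimately show ?thesis
    by (simp add: sin_dist_def x_def)
qed

lemma abs_minus_saw_le:
  assumes "\<bar>u\<bar> \<le> 1"
  shows "\<bar>u - saw u\<bar> \<le> 11 * \<bar>u\<bar> ^ 3"
proof -
  define y where "y = 2 * pi * u"
  have "\<bar>u - saw u\<bar> = \<bar>sin y - y\<bar> / (2 * pi)"
    by (simp add: saw_def y_def field_simps)
  also have "\<dots> \<le> \<bar>y\<bar> ^ 3 / 6 / (2 * pi)"
    by (intro divide_right_mono abs_sin_minus_le) simp
  also have "\<dots> = (2 * pi ^ 2 / 3) * \<bar>u\<bar> ^ 3"
    by (simp add: y_def abs_mult power_mult_distrib power3_eq_cube power2_eq_square)
  also have "\<dots> \<le> 11 * \<bar>u\<bar> ^ 3"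
  proof -
    have "pi ^ 2 \<le> 4 ^ 2"
      using pi_less_4 by (intro power_mono) auto
    then show ?thesis
      by (intro mult_right_mono) auto
  qed
  finally show ?thesis .
qed

lemma powr_add_le:
  fixes a b t :: real
  assumes "0 \<le> a" "0 \<le> b" "0 < t"
  shows "(a + b) powr t \<le> 2 powr t * (a powr t + b powr t)"
proof -
  have "(a + b) powr t \<le> (2 * max a b) powr t"
    using assms by (intro powr_mono2) auto
  also have "\<dots> = 2 powr t * max a b powr t"
    using assms by (simp add: powr_mult)
  also have "max a b powr t \<le> a powr t + b powr t"
    by (simp add: max_def)
  then have "2 powr t * max a b powr t \<le> 2 powr t * (a powr t + b powr t)"
    by (intro mult_left_mono) auto
  finally show ?thesis .
qed

lemma two_powr_le_3: "t \<le> 3 / 2 \<Longrightarrow> 2 powr t \<le> (3 :: real)"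
proof -
  assume "t \<le> 3 / 2"
  then have "2 powr t \<le> 2 powr (3 / 2 :: real)"
    by (intro powr_mono) auto
  also have "2 powr (3 / 2 :: real) = sqrt 8"
  proof -
    have "(2 :: real) powr (3 / 2) = (2 powr 3) powr (1 / 2)"
      by (subst powr_powr) simp
    also have "\<dots> = sqrt 8"
      by (simp add: powr_numeral powr_half_sqrt)
    finally show ?thesis .
  qed
  also have "sqrt 8 \<le> (3 :: real)"
    by (rule real_le_lsqrt) auto
  finally show ?thesis .
qed

lemma holder_expansion_small:
  assumes hq: "\<And>x y. x \<noteq> y \<Longrightarrow> holder_quot \<theta> f x y \<le> A" and \<theta>: "0 < \<theta>" "\<theta> < 3 / 2"
    and u: "\<bar>u1\<bar> \<le> 1 / 2" "\<bar>u2\<bar> \<le> 1 / 2"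
  shows "\<bar>f (fst x + u1, snd x + u2) - f x - (if \<theta> \<le> 1 then 0 else part1 f x) * u1\<bar>
    \<le> 3 * A * (sin_dist u1 powr \<theta> + sin_dist u2 powr (2 * \<theta> / 3))"
proof (cases "u1 = 0 \<and> u2 = 0")
  case True
  then show ?thesis
    using holder_bound_nonneg[OF hq] by simp
next
  case False
  define y where "y = (fst x + u1, snd x + u2)"
  have "x \<noteq> y"
    using False by (auto simp: y_def prod_eq_iff)
  then have "\<bar>f y - f x - (if \<theta> \<le> 1 then 0 else part1 f x) * u1\<bar> \<le> A * dT y x powr \<theta>"
    using hq[of x y] by (simp add: holder_quot_le_iff holder_incr_def y_def split: if_splits)
  also have "\<dots> \<le> A * (2 powr \<theta> * (\<bar>u1\<bar> powr \<theta> + \<bar>u2\<bar> powr (2 * \<theta> / 3)))"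
    using powr_add_le[of "\<bar>u1\<bar>" "\<bar>u2\<bar> powr (2 / 3)" \<theta>] \<theta> holder_bound_nonneg[OF hq]
    by (intro mult_left_mono) (simp_all add: y_def dT_def powr_powr)
  also have "\<dots> \<le> 3 * A * (sin_dist u1 powr \<theta> + sin_dist u2 powr (2 * \<theta> / 3))"
    unfolding mult.assoc[of 3] mult.left_commute[of 3 A]
    using \<theta> two_powr_le_3[of \<theta>] abs_le_sin_dist[OF u(1)] abs_le_sin_dist[OF u(2)] holder_bound_nonneg[OF hq]
    by (intro mult_left_mono mult_mono add_mono powr_mono2) auto
  finally show ?thesis
    unfolding y_def .
qed

lemma holder_expansion:
  assumes per: "periodic2 f" and hq: "\<And>x y. x \<noteq> y \<Longrightarrow> holder_quot \<theta> f x y \<le> A"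
    and \<theta>: "0 < \<theta>" "\<theta> < 3 / 2"
  shows "\<bar>f z - f x - (if \<theta> \<le> 1 then 0 else part1 f x) * saw (fst z - fst x)\<bar>
    \<le> 14 * A * (sin_dist (fst z - fst x) powr \<theta> + sin_dist (snd z - snd x) powr (2 * \<theta> / 3))"
proof -
  interpret sin_dist: periodic_fun_simple' sin_dist
    by (rule periodic_sin_dist)
  interpret saw: periodic_fun_simple' saw
    by (rule periodic_saw)
  define D where "D = (if \<theta> \<le> 1 then 0 else part1 f x)"
  define u1 where "u1 = fst z - fst x - of_int (round (fst z - fst x))"
  define u2 where "u2 = snd z - snd x - of_int (round (snd z - snd x))"
  have u: "\<bar>u1\<bar> \<le> 1 / 2" "\<bar>u2\<bar> \<le> 1 / 2"
    unfolding u1_def u2_def using of_int_round_abs_le by (auto simp: abs_minus_commute)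
  have fz: "f z = f (fst x + u1, snd x + u2)"
    using periodic2_plus_of_int[OF per, of "fst x + u1" "round (fst z - fst x)" "snd x + u2" "round (snd z - snd x)"]
    by (simp add: u1_def u2_def)
  have sd: "sin_dist (fst z - fst x) = sin_dist u1" "sin_dist (snd z - snd x) = sin_dist u2"
    "saw (fst z - fst x) = saw u1"
    using sin_dist.minus_of_int saw.minus_of_int by (simp_all add: u1_def u2_def)
  define S where "S = sin_dist u1 powr \<theta> + sin_dist u2 powr (2 * \<theta> / 3)"
  have "\<bar>f z - f x - D * u1\<bar> \<le> 3 * A * S"
    unfolding fz D_def S_def by (rule holder_expansion_small[OF hq \<theta> u])
  moreover have "\<bar>D * (u1 - saw u1)\<bar> \<le> 11 * A * S"
  proof (cases "\<theta> \<le> 1")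
    case True
    then show ?thesis
      using holder_bound_nonneg[OF hq] by (simp add: D_def S_def)
  next
    case False
    have "\<bar>u1 - saw u1\<bar> \<le> 11 * \<bar>u1\<bar> ^ 3"
      using u by (intro abs_minus_saw_le) auto
    also have "\<bar>u1\<bar> ^ 3 \<le> \<bar>u1\<bar> powr \<theta>"
    proof (cases "u1 = 0")
      case False
      then show ?thesis
        using u \<theta> powr_mono'[of \<theta> 3 "\<bar>u1\<bar>"] by (simp add: powr_realpow)
    qed simp
    also have "\<bar>u1\<bar> powr \<theta> \<le> S"
      using abs_le_sin_dist[OF u(1)] \<theta> by (simp add: S_def add_increasing2 powr_mono2)
    finally have "\<bar>D\<bar> * \<bar>u1 - saw u1\<bar> \<le> A * (11 * S)"
      using False holder_part1_bound[OF per hq] holder_bound_nonneg[OF hq]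
      by (intro mult_mono) (auto simp: D_def)
    then show ?thesis
      by (simp add: abs_mult)
  qed
  moreover have "\<bar>f z - f x - D * saw u1\<bar> \<le> \<bar>f z - f x - D * u1\<bar> + \<bar>D * (u1 - saw u1)\<bar>"
    using abs_triangle_ineq[of "f z - f x - D * u1" "D * (u1 - saw u1)"] by (simp add: algebra_simps)
  ultimately have "\<bar>f z - f x - D * saw u1\<bar> \<le> 14 * A * S"
    by linarith
  then show ?thesis
    unfolding D_def S_def sd .
qed

lemma holder_continuous:
  assumes per: "periodic2 f" and hq: "\<And>x y. x \<noteq> y \<Longrightarrow> holder_quot \<theta> f x y \<le> A"
    and \<theta>: "0 < \<theta>" "\<theta> < 3 / 2"
  shows "continuous_on UNIV f"
proof (rule continuous_at_imp_continuous_on, intro ballI)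
  fix x :: "real \<times> real"
  define D where "D = (if \<theta> \<le> 1 then 0 else part1 f x)"
  define G where "G z = \<bar>D\<bar> * \<bar>saw (fst z - fst x)\<bar>
    + 14 * A * (sin_dist (fst z - fst x) powr \<theta> + sin_dist (snd z - snd x) powr (2 * \<theta> / 3))" for z
  have bound: "norm (f z - f x) \<le> G z" for z
  proof -
    have "\<bar>f z - f x\<bar> \<le> \<bar>f z - f x - D * saw (fst z - fst x)\<bar> + \<bar>D * saw (fst z - fst x)\<bar>"
      using abs_triangle_ineq[of "f z - f x - D * saw (fst z - fst x)" "D * saw (fst z - fst x)"] by simp
    then show ?thesis
      using holder_expansion[OF per hq \<theta>, of z x] unfolding G_def D_def by (simp add: abs_mult)
  qed
  have "continuous_on UNIV G"
    unfolding G_def using \<theta>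
    by (intro continuous_intros continuous_on_compose2[OF continuous_on_saw] continuous_on_powr'
        continuous_on_compose2[OF continuous_on_sin_dist]) (auto simp: sin_dist_def)
  then have "isCont G x"
    using continuous_on_eq_continuous_at[OF open_UNIV, of G] by blast
  moreover have "G x = 0"
    using \<theta> by (simp add: G_def saw_def sin_dist_def)
  ultimately have "(G \<longlongrightarrow> 0) (at x)"
    unfolding isCont_def by simp
  then have "((\<lambda>z. f z - f x) \<longlongrightarrow> 0) (at x)"
    by (rule Lim_null_comparison[OF always_eventually, rotated]) (rule allI, rule bound)
  then show "isCont f x"
    by (simp add: isCont_def LIM_zero_iff)
qed

lemma integrable_on_unitsq: "continuous_on UNIV (F :: real \<times> real \<Rightarrow> real) \<Longrightarrow> F integrable_on unitsq"
  by (rule integrable_continuous) (auto intro: continuous_on_subset)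

lemma integral_tensor_abs_le:
  fixes R :: "real \<times> real \<Rightarrow> real" and p q W1 W2 :: "real \<Rightarrow> real"
  assumes cont: "continuous_on UNIV R" "continuous_on UNIV p" "continuous_on UNIV q"
      "continuous_on UNIV W1" "continuous_on UNIV W2"
    and R: "\<And>z. \<bar>R z\<bar> \<le> B * (W1 (fst z) + W2 (snd z))"
    and pq: "\<And>v. 0 \<le> p v" "\<And>v. 0 \<le> q v" "integral {0..1} p = 1" "integral {0..1} q = 1"
  shows "\<bar>integral unitsq (\<lambda>z. R z * (p (fst z) * q (snd z)))\<bar>
    \<le> B * (integral {0..1} (\<lambda>v. W1 v * p v) + integral {0..1} (\<lambda>v. W2 v * q v))"
proof -
  define U where "U z = (W1 (fst z) * p (fst z)) * q (snd z) + p (fst z) * (W2 (snd z) * q (snd z))" for z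
  have cU: "continuous_on UNIV U"
    unfolding U_def[abs_def]
    by (intro continuous_intros continuous_on_fst_comp continuous_on_snd_comp cont continuous_on_mult)
  have "\<bar>integral unitsq (\<lambda>z. R z * (p (fst z) * q (snd z)))\<bar> \<le> integral unitsq (\<lambda>z. B * U z)"
  proof -
    have "norm (integral unitsq (\<lambda>z. R z * (p (fst z) * q (snd z)))) \<le> integral unitsq (\<lambda>z. B * U z)"
    proof (rule integral_norm_bound_integral)
      show "(\<lambda>z. R z * (p (fst z) * q (snd z))) integrable_on unitsq" "(\<lambda>z. B * U z) integrable_on unitsq"
        by (intro integrable_on_unitsq continuous_intros continuous_on_fst_comp continuous_on_snd_comp cont cU)+
      show "norm (R z * (p (fst z) * q (snd z))) \<le> B * U z" for z
        using mult_right_mono[OF R[of z], of "p (fst z) * q (snd z)"] pq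
        by (simp add: U_def abs_mult algebra_simps)
    qed
    then show ?thesis
      by simp
  qed
  also have "integral unitsq (\<lambda>z. B * U z)
      = B * (integral {0..1} (\<lambda>v. W1 v * p v) + integral {0..1} (\<lambda>v. W2 v * q v))"
  proof -
    have "integral unitsq U = integral unitsq (\<lambda>z. W1 (fst z) * p (fst z) * q (snd z))
        + integral unitsq (\<lambda>z. p (fst z) * (W2 (snd z) * q (snd z)))"
      unfolding U_def
      by (intro integral_add integrable_on_unitsq continuous_intros continuous_on_fst_comp continuous_on_snd_comp
          cont continuous_on_mult)
    also have "\<dots> = integral {0..1} (\<lambda>v. W1 v * p v) * integral {0..1} q
        + integral {0..1} p * integral {0..1} (\<lambda>v. W2 v * q v)"
      using integral_tensor[of "\<lambda>v. W1 v * p v" q] integral_tensor[of p "\<lambda>v. W2 v * q v"] cont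
      by (simp add: continuous_on_mult)
    finally show ?thesis
      using pq by simp
  qed
  finally show ?thesis .
qed

lemma continuous_on_bump2: "continuous_on UNIV (bump2 n1 n2 x)"
  unfolding bump2_def[abs_def]
  by (intro continuous_on_mult continuous_on_fst_comp continuous_on_snd_comp continuous_on_shift continuous_on_bump)

lemma integral_saw_bump2: "integral unitsq (\<lambda>z. saw (fst z - fst x) * bump2 n1 n2 x z) = 0"
proof -
  have "integral unitsq (\<lambda>z. saw (fst z - fst x) * bump2 n1 n2 x z)
      = integral {0..1} (\<lambda>v. saw (v - fst x) * bump n1 (v - fst x)) * integral {0..1} (\<lambda>v. bump n2 (v - snd x))"
    unfolding bump2_def mult.assoc[symmetric]
    by (intro integral_tensor continuous_on_mult continuous_on_shift continuous_on_saw continuous_on_bump)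
  then show ?thesis
    by (simp add: integral_unique[OF has_integral_saw_bump])
qed

lemma holder_mollify_error:
  assumes per: "periodic2 f" and hq: "\<And>x y. x \<noteq> y \<Longrightarrow> holder_quot \<alpha> f x y \<le> A"
    and \<alpha>: "0 < \<alpha>" "\<alpha> < 3 / 2"
  shows "\<bar>integral unitsq (\<lambda>z. f z * bump2 n1 n2 x z) - f x\<bar>
    \<le> 28 * A * ((2 * real n1 + 2) powr (- \<alpha> / 2) + (2 * real n2 + 2) powr (- \<alpha> / 3))"
proof -
  define D where "D = (if \<alpha> \<le> 1 then 0 else part1 f x)"
  define R where "R z = f z - f x - D * saw (fst z - fst x)" for z
  have cR: "continuous_on UNIV R"
    unfolding R_def[abs_def]
    by (intro continuous_intros holder_continuous[OF per hq \<alpha>] continuous_on_fst_comp continuous_on_shift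
        continuous_on_saw)
  have cS: "continuous_on UNIV (\<lambda>z. saw (fst z - fst x) * bump2 n1 n2 x z)"
    by (intro continuous_on_mult continuous_on_fst_comp continuous_on_shift continuous_on_saw continuous_on_bump2)
  have "integral unitsq (\<lambda>z. f z * bump2 n1 n2 x z)
      = integral unitsq (\<lambda>z. R z * bump2 n1 n2 x z + f x * bump2 n1 n2 x z
        + D * (saw (fst z - fst x) * bump2 n1 n2 x z))"
    by (simp add: R_def algebra_simps)
  also have "\<dots> = integral unitsq (\<lambda>z. R z * bump2 n1 n2 x z) + f x * integral unitsq (bump2 n1 n2 x)
      + D * integral unitsq (\<lambda>z. saw (fst z - fst x) * bump2 n1 n2 x z)"
  proof -
    have "(\<lambda>z. R z * bump2 n1 n2 x z) integrable_on unitsq" "(\<lambda>z. f x * bump2 n1 n2 x z) integrable_on unitsq"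
      "(\<lambda>z. D * (saw (fst z - fst x) * bump2 n1 n2 x z)) integrable_on unitsq"
      by (intro integrable_on_unitsq continuous_on_mult[OF cR continuous_on_bump2]
          continuous_on_mult[OF continuous_on_const continuous_on_bump2] continuous_on_mult[OF continuous_on_const cS])+
    then show ?thesis
      by (simp add: integral_add integrable_add)
  qed
  also have "\<dots> = integral unitsq (\<lambda>z. R z * bump2 n1 n2 x z) + f x"
    by (simp add: integral_bump2 integral_saw_bump2)
  finally have "\<bar>integral unitsq (\<lambda>z. f z * bump2 n1 n2 x z) - f x\<bar> = \<bar>integral unitsq (\<lambda>z. R z * bump2 n1 n2 x z)\<bar>"
    by simp
  also have "\<dots> \<le> 14 * A * (integral {0..1} (\<lambda>v. sin_dist (v - fst x) powr \<alpha> * bump n1 (v - fst x))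
      + integral {0..1} (\<lambda>v. sin_dist (v - snd x) powr (2 * \<alpha> / 3) * bump n2 (v - snd x)))"
    unfolding bump2_def
  proof (rule integral_tensor_abs_le[OF cR])
    show "\<bar>R z\<bar> \<le> 14 * A * (sin_dist (fst z - fst x) powr \<alpha> + sin_dist (snd z - snd x) powr (2 * \<alpha> / 3))" for z
      unfolding R_def D_def by (rule holder_expansion[OF per hq \<alpha>])
  qed (use \<alpha> in \<open>auto intro: continuous_on_sin_dist_powr continuous_on_shift continuous_on_bump bump_nonneg
      integral_unique[OF has_integral_bump]\<close>)
  also have "\<dots> \<le> 14 * A * (2 * (2 * real n1 + 2) powr (- \<alpha> / 2) + 2 * (2 * real n2 + 2) powr (- (2 * \<alpha> / 3) / 2))"
    using \<alpha> holder_bound_nonneg[OF hq] by (intro mult_left_mono add_mono bump_moment_le) auto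
  finally show ?thesis
    by (simp add: algebra_simps)
qed

lemma integral_zero_mean_fst_abs_le:
  fixes G :: "real \<times> real \<Rightarrow> real" and p q W :: "real \<Rightarrow> real"
  assumes cont: "continuous_on UNIV G" "continuous_on UNIV p" "continuous_on UNIV q" "continuous_on UNIV W"
    and G: "\<And>z. \<bar>G z - G (a, snd z)\<bar> \<le> B * W (fst z)" and B: "0 \<le> B"
    and p: "integral {0..1} p = 0" and q: "\<And>v. 0 \<le> q v" "integral {0..1} q = 1"
  shows "\<bar>integral unitsq (\<lambda>z. G z * (p (fst z) * q (snd z)))\<bar> \<le> B * integral {0..1} (\<lambda>v. W v * \<bar>p v\<bar>)"
proof -
  define F where "F z = (G z - G (a, snd z)) * (p (fst z) * q (snd z))" for z
  have cGa: "continuous_on UNIV (\<lambda>w. G (a, w))"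
    by (rule continuous_on_compose2[OF cont(1)]) (auto intro!: continuous_intros)
  have cF: "continuous_on UNIV F"
    unfolding F_def[abs_def]
    by (intro continuous_intros continuous_on_fst_comp continuous_on_snd_comp cont cGa)
  have cH: "continuous_on UNIV (\<lambda>z. G (a, snd z) * (p (fst z) * q (snd z)))"
    by (intro continuous_on_mult continuous_on_fst_comp continuous_on_snd_comp cont cGa)
  have "(\<lambda>z. G z * (p (fst z) * q (snd z))) = (\<lambda>z. F z + G (a, snd z) * (p (fst z) * q (snd z)))"
    by (auto simp: F_def algebra_simps)
  then have "integral unitsq (\<lambda>z. G z * (p (fst z) * q (snd z)))
      = integral unitsq F + integral unitsq (\<lambda>z. p (fst z) * (G (a, snd z) * q (snd z)))"
    using integral_add[OF integrable_on_unitsq[OF cF] integrable_on_unitsq[OF cH]] by (simp add: mult_ac)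
  also have "integral unitsq (\<lambda>z. p (fst z) * (G (a, snd z) * q (snd z)))
      = integral {0..1} p * integral {0..1} (\<lambda>w. G (a, w) * q w)"
    by (intro integral_tensor continuous_on_mult cont cGa)
  finally have "integral unitsq (\<lambda>z. G z * (p (fst z) * q (snd z))) = integral unitsq F"
    using p by simp
  also have "\<bar>integral unitsq F\<bar> \<le> integral unitsq (\<lambda>z. B * ((W (fst z) * \<bar>p (fst z)\<bar>) * q (snd z)))"
  proof -
    have "norm (integral unitsq F) \<le> integral unitsq (\<lambda>z. B * ((W (fst z) * \<bar>p (fst z)\<bar>) * q (snd z)))"
    proof (rule integral_norm_bound_integral)
      show "F integrable_on unitsq"
        by (rule integrable_on_unitsq[OF cF])
      show "(\<lambda>z. B * ((W (fst z) * \<bar>p (fst z)\<bar>) * q (snd z))) integrable_on unitsq"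
        by (intro integrable_on_unitsq continuous_intros continuous_on_fst_comp continuous_on_snd_comp cont)
      show "norm (F z) \<le> B * ((W (fst z) * \<bar>p (fst z)\<bar>) * q (snd z))" for z
      proof -
        have "norm (F z) = \<bar>G z - G (a, snd z)\<bar> * (\<bar>p (fst z)\<bar> * q (snd z))"
          using q by (simp add: F_def abs_mult)
        also have "\<dots> \<le> B * W (fst z) * (\<bar>p (fst z)\<bar> * q (snd z))"
          using q by (intro mult_right_mono G) simp
        finally show ?thesis
          by (simp add: mult_ac)
      qed
    qed
    then show ?thesis
      by simp
  qed
  also have "\<dots> = B * (integral {0..1} (\<lambda>v. W v * \<bar>p v\<bar>) * integral {0..1} q)"
    using integral_tensor[of "\<lambda>v. W v * \<bar>p v\<bar>" q] cont by (simp add: continuous_intros)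
  finally show ?thesis
    using q by simp
qed

lemma integral_unitsq_swap:
  fixes F :: "real \<times> real \<Rightarrow> real"
  assumes "continuous_on UNIV F"
  shows "integral unitsq F = integral unitsq (\<lambda>z. F (snd z, fst z))"
proof -
  have "continuous_on unitsq (\<lambda>(x, y). F (x, y))"
    using continuous_on_subset[OF assms] by simp
  from integral_swap_2dim[OF this] show ?thesis
    by (simp add: case_prod_beta')
qed

lemma integral_zero_mean_snd_abs_le:
  fixes G :: "real \<times> real \<Rightarrow> real" and p q W :: "real \<Rightarrow> real"
  assumes cont: "continuous_on UNIV G" "continuous_on UNIV p" "continuous_on UNIV q" "continuous_on UNIV W"
    and G: "\<And>z. \<bar>G z - G (fst z, a)\<bar> \<le> B * W (snd z)" and B: "0 \<le> B"
    and p: "\<And>v. 0 \<le> p v" "integral {0..1} p = 1" and q: "integral {0..1} q = 0"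
  shows "\<bar>integral unitsq (\<lambda>z. G z * (p (fst z) * q (snd z)))\<bar> \<le> B * integral {0..1} (\<lambda>v. W v * \<bar>q v\<bar>)"
proof -
  have cG: "continuous_on UNIV (\<lambda>z. G (snd z, fst z))"
    by (rule continuous_on_compose2[OF cont(1)]) (auto intro!: continuous_intros)
  have "integral unitsq (\<lambda>z. G z * (p (fst z) * q (snd z)))
      = integral unitsq (\<lambda>z. G (snd z, fst z) * (q (fst z) * p (snd z)))"
    by (subst integral_unitsq_swap)
       (auto simp: mult_ac intro!: continuous_intros continuous_on_fst_comp continuous_on_snd_comp cont)
  also have "\<bar>\<dots>\<bar> \<le> B * integral {0..1} (\<lambda>v. W v * \<bar>q v\<bar>)"
    by (rule integral_zero_mean_fst_abs_le[where a = a]) (use assms cG in auto)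
  finally show ?thesis .
qed

lemma holder_slice_fst_le:
  assumes "periodic2 g" "\<And>x y. x \<noteq> y \<Longrightarrow> holder_quot \<theta> g x y \<le> B" "0 < \<theta>" "\<theta> \<le> 1"
  shows "\<bar>g z - g (a, snd z)\<bar> \<le> 14 * B * sin_dist (fst z - a) powr \<theta>"
  using holder_expansion[OF assms(1,2), of z "(a, snd z)"] assms(3,4) by (simp add: sin_dist_def)

lemma holder_slice_snd_le:
  assumes "periodic2 h" "\<And>x y. x \<noteq> y \<Longrightarrow> holder_quot \<theta> h x y \<le> B" "0 < \<theta>" "\<theta> < 3 / 2"
  shows "\<bar>h z - h (fst z, a)\<bar> \<le> 14 * B * sin_dist (snd z - a) powr (2 * \<theta> / 3)"
  using holder_expansion[OF assms, of z "(fst z, a)"] by (simp add: sin_dist_def saw_def)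

lemma integral_part1_bump2_le:
  assumes per: "periodic2 g" and hq: "\<And>x y. x \<noteq> y \<Longrightarrow> holder_quot \<theta> g x y \<le> B"
    and \<theta>: "0 < \<theta>" "\<theta> \<le> 1"
  shows "\<bar>integral unitsq (\<lambda>z. g z * part1 (bump2 n1 n2 x) z)\<bar>
    \<le> 84 * pi * B * (2 * real n1 + 2) powr ((1 - \<theta>) / 2)"
proof -
  have "\<bar>integral unitsq (\<lambda>z. g z * (bump' n1 (fst z - fst x) * bump n2 (snd z - snd x)))\<bar>
      \<le> 14 * B * integral {0..1} (\<lambda>v. sin_dist (v - fst x) powr \<theta> * \<bar>bump' n1 (v - fst x)\<bar>)"
    using \<theta> holder_bound_nonneg[OF hq]
    by (intro integral_zero_mean_fst_abs_le[where a = "fst x"] holder_slice_fst_le[OF per hq]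
        holder_continuous[OF per hq] continuous_on_shift continuous_on_bump' continuous_on_bump
        continuous_on_sin_dist_powr integral_unique[OF has_integral_bump'] integral_unique[OF has_integral_bump]
        bump_nonneg) auto
  also have "\<dots> \<le> 14 * B * (6 * pi * (2 * real n1 + 2) powr ((1 - \<theta>) / 2))"
    using \<theta> holder_bound_nonneg[OF hq] by (intro mult_left_mono bump'_moment_le) auto
  finally show ?thesis
    by (simp add: part1_bump2 mult_ac)
qed

lemma integral_part1_part1_bump2_le:
  assumes per: "periodic2 g" and hq: "\<And>x y. x \<noteq> y \<Longrightarrow> holder_quot \<theta> g x y \<le> B"
    and \<theta>: "0 < \<theta>" "\<theta> \<le> 1"
  shows "\<bar>integral unitsq (\<lambda>z. g z * part1 (part1 (bump2 n1 n2 x)) z)\<bar>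
    \<le> 84 * pi ^ 2 * B * (2 * real n1 + 2) powr (1 - \<theta> / 2)"
proof -
  have "\<bar>integral unitsq (\<lambda>z. g z * (bump'' n1 (fst z - fst x) * bump n2 (snd z - snd x)))\<bar>
      \<le> 14 * B * integral {0..1} (\<lambda>v. sin_dist (v - fst x) powr \<theta> * \<bar>bump'' n1 (v - fst x)\<bar>)"
    using \<theta> holder_bound_nonneg[OF hq]
    by (intro integral_zero_mean_fst_abs_le[where a = "fst x"] holder_slice_fst_le[OF per hq]
        holder_continuous[OF per hq] continuous_on_shift continuous_on_bump'' continuous_on_bump
        continuous_on_sin_dist_powr integral_unique[OF has_integral_bump''] integral_unique[OF has_integral_bump]
        bump_nonneg) auto
  also have "\<dots> \<le> 14 * B * (6 * pi ^ 2 * (2 * real n1 + 2) powr (1 - \<theta> / 2))"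
    using \<theta> holder_bound_nonneg[OF hq] by (intro mult_left_mono bump''_moment_le) auto
  finally show ?thesis
    by (simp add: part1_part1_bump2 mult_ac)
qed

lemma integral_part2_bump2_le:
  assumes per: "periodic2 h" and hq: "\<And>x y. x \<noteq> y \<Longrightarrow> holder_quot \<theta> h x y \<le> B"
    and \<theta>: "0 < \<theta>" "\<theta> < 3 / 2"
  shows "\<bar>integral unitsq (\<lambda>z. h z * part2 (bump2 n1 n2 x) z)\<bar>
    \<le> 84 * pi * B * (2 * real n2 + 2) powr ((1 - 2 * \<theta> / 3) / 2)"
proof -
  have "\<bar>integral unitsq (\<lambda>z. h z * (bump n1 (fst z - fst x) * bump' n2 (snd z - snd x)))\<bar>
      \<le> 14 * B * integral {0..1} (\<lambda>v. sin_dist (v - snd x) powr (2 * \<theta> / 3) * \<bar>bump' n2 (v - snd x)\<bar>)"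
    using \<theta> holder_bound_nonneg[OF hq]
    by (intro integral_zero_mean_snd_abs_le[where a = "snd x"] holder_slice_snd_le[OF per hq]
        holder_continuous[OF per hq] continuous_on_shift continuous_on_bump' continuous_on_bump
        continuous_on_sin_dist_powr integral_unique[OF has_integral_bump'] integral_unique[OF has_integral_bump]
        bump_nonneg) auto
  also have "\<dots> \<le> 14 * B * (6 * pi * (2 * real n2 + 2) powr ((1 - 2 * \<theta> / 3) / 2))"
    using \<theta> holder_bound_nonneg[OF hq] by (intro mult_left_mono bump'_moment_le) auto
  finally show ?thesis
    by (simp add: part2_bump2 mult_ac)
qed

lemma part1_const: "part1 (\<lambda>z. c) = (\<lambda>z. 0)"
  unfolding part1_def by (auto intro!: DERIV_imp_deriv)

lemma part2_const: "part2 (\<lambda>z. c) = (\<lambda>z. 0)"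
  unfolding part2_def by (auto intro!: DERIV_imp_deriv)

lemma decomp1_integral:
  assumes "decomp1 f c g h"
  shows "integral unitsq f = c"
proof -
  have "integral unitsq (\<lambda>z. f z * bump2 0 0 0 z) = c * integral unitsq (bump2 0 0 0)
      - integral unitsq (\<lambda>z. g z * part1 (bump2 0 0 0) z) - integral unitsq (\<lambda>z. h z * part2 (bump2 0 0 0) z)"
    using assms smooth2_bump2 periodic2_bump2 unfolding decomp1_def by blast
  then show ?thesis
    using integral_bump2[of 0 0 0] by (simp add: bump2_0_0 part1_const part2_const)
qed

lemma decomp2_integral:
  assumes "decomp2 f c g h"
  shows "integral unitsq f = c"
proof -
  have "integral unitsq (\<lambda>z. f z * bump2 0 0 0 z) = c * integral unitsq (bump2 0 0 0)
      + integral unitsq (\<lambda>z. g z * part1 (part1 (bump2 0 0 0)) z) - integral unitsq (\<lambda>z. h z * part2 (bump2 0 0 0) z)"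
    using assms smooth2_bump2 periodic2_bump2 unfolding decomp2_def by blast
  then show ?thesis
    using integral_bump2[of 0 0 0] by (simp add: bump2_0_0 part1_const part2_const)
qed

lemma pi_mult_le_pi_squared_mult: "0 \<le> B \<Longrightarrow> pi * B \<le> pi ^ 2 * B"
  using pi_gt3 by (intro mult_right_mono) (auto simp: power2_eq_square)

lemma decomp1_mollify_bound:
  assumes \<beta>: "-1 < \<beta>" "\<beta> < 0" and per: "periodic2 g" "periodic2 h"
    and fin: "holder_fin (\<beta> + 1) g" "holder_fin (\<beta> + 3 / 2) h" and dec: "decomp1 f c g h"
  shows "\<bar>integral unitsq (\<lambda>z. f z * bump2 n1 n2 x z) - c\<bar>
    \<le> 84 * pi ^ 2 * (holder_sn (\<beta> + 1) g * (2 * real n1 + 2) powr (- \<beta> / 2)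
      + holder_sn (\<beta> + 3 / 2) h * (2 * real n2 + 2) powr (- \<beta> / 3))"
proof -
  have "\<bar>integral unitsq (\<lambda>z. f z * bump2 n1 n2 x z) - c\<bar>
      = \<bar>integral unitsq (\<lambda>z. g z * part1 (bump2 n1 n2 x) z) + integral unitsq (\<lambda>z. h z * part2 (bump2 n1 n2 x) z)\<bar>"
    using dec smooth2_bump2 periodic2_bump2 integral_bump2 unfolding decomp1_def by (simp add: abs_minus_commute)
  also have "\<dots> \<le> \<bar>integral unitsq (\<lambda>z. g z * part1 (bump2 n1 n2 x) z)\<bar>
      + \<bar>integral unitsq (\<lambda>z. h z * part2 (bump2 n1 n2 x) z)\<bar>"
    by (rule abs_triangle_ineq)
  also have "\<dots> \<le> 84 * pi * (holder_sn (\<beta> + 1) g * (2 * real n1 + 2) powr (- \<beta> / 2))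
      + 84 * pi * (holder_sn (\<beta> + 3 / 2) h * (2 * real n2 + 2) powr (- \<beta> / 3))"
  proof (rule add_mono)
    show "\<bar>integral unitsq (\<lambda>z. g z * part1 (bump2 n1 n2 x) z)\<bar>
        \<le> 84 * pi * (holder_sn (\<beta> + 1) g * (2 * real n1 + 2) powr (- \<beta> / 2))"
      using integral_part1_bump2_le[OF per(1) holder_quot_le_holder_sn[OF fin(1)]] \<beta> by (simp add: mult_ac)
    have "(1 - 2 * (\<beta> + 3 / 2) / 3) / 2 = - \<beta> / 3"
      by (simp add: field_simps)
    then show "\<bar>integral unitsq (\<lambda>z. h z * part2 (bump2 n1 n2 x) z)\<bar>
        \<le> 84 * pi * (holder_sn (\<beta> + 3 / 2) h * (2 * real n2 + 2) powr (- \<beta> / 3))"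
      using integral_part2_bump2_le[OF per(2) holder_quot_le_holder_sn[OF fin(2)]] \<beta> by (simp add: mult_ac)
  qed
  also have "\<dots> \<le> 84 * pi ^ 2 * (holder_sn (\<beta> + 1) g * (2 * real n1 + 2) powr (- \<beta> / 2)
      + holder_sn (\<beta> + 3 / 2) h * (2 * real n2 + 2) powr (- \<beta> / 3))"
    using pi_mult_le_pi_squared_mult holder_sn_nonneg[OF fin(1)] holder_sn_nonneg[OF fin(2)]
    by (simp add: distrib_left mult.assoc add_mono)
  finally show ?thesis .
qed

lemma decomp2_mollify_bound:
  assumes \<beta>: "-3 / 2 < \<beta>" "\<beta> \<le> -1" and per: "periodic2 g" "periodic2 h"
    and fin: "holder_fin (\<beta> + 2) g" "holder_fin (\<beta> + 3 / 2) h" and dec: "decomp2 f c g h"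
  shows "\<bar>integral unitsq (\<lambda>z. f z * bump2 n1 n2 x z) - c\<bar>
    \<le> 84 * pi ^ 2 * (holder_sn (\<beta> + 2) g * (2 * real n1 + 2) powr (- \<beta> / 2)
      + holder_sn (\<beta> + 3 / 2) h * (2 * real n2 + 2) powr (- \<beta> / 3))"
proof -
  have "\<bar>integral unitsq (\<lambda>z. f z * bump2 n1 n2 x z) - c\<bar>
      = \<bar>integral unitsq (\<lambda>z. g z * part1 (part1 (bump2 n1 n2 x)) z)
        - integral unitsq (\<lambda>z. h z * part2 (bump2 n1 n2 x) z)\<bar>"
    using dec smooth2_bump2 periodic2_bump2 integral_bump2 unfolding decomp2_def by simp
  also have "\<dots> \<le> \<bar>integral unitsq (\<lambda>z. g z * part1 (part1 (bump2 n1 n2 x)) z)\<bar>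
      + \<bar>integral unitsq (\<lambda>z. h z * part2 (bump2 n1 n2 x) z)\<bar>"
    by (rule abs_triangle_ineq4)
  also have "\<dots> \<le> 84 * pi ^ 2 * (holder_sn (\<beta> + 2) g * (2 * real n1 + 2) powr (- \<beta> / 2))
      + 84 * pi * (holder_sn (\<beta> + 3 / 2) h * (2 * real n2 + 2) powr (- \<beta> / 3))"
  proof (rule add_mono)
    have "1 - (\<beta> + 2) / 2 = - \<beta> / 2"
      by (simp add: field_simps)
    then show "\<bar>integral unitsq (\<lambda>z. g z * part1 (part1 (bump2 n1 n2 x)) z)\<bar>
        \<le> 84 * pi ^ 2 * (holder_sn (\<beta> + 2) g * (2 * real n1 + 2) powr (- \<beta> / 2))"
      using integral_part1_part1_bump2_le[OF per(1) holder_quot_le_holder_sn[OF fin(1)]] \<beta> by (simp add: mult_ac)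
    have "(1 - 2 * (\<beta> + 3 / 2) / 3) / 2 = - \<beta> / 3"
      by (simp add: field_simps)
    then show "\<bar>integral unitsq (\<lambda>z. h z * part2 (bump2 n1 n2 x) z)\<bar>
        \<le> 84 * pi * (holder_sn (\<beta> + 3 / 2) h * (2 * real n2 + 2) powr (- \<beta> / 3))"
      using integral_part2_bump2_le[OF per(2) holder_quot_le_holder_sn[OF fin(2)]] \<beta> by (simp add: mult_ac)
  qed
  also have "\<dots> \<le> 84 * pi ^ 2 * (holder_sn (\<beta> + 2) g * (2 * real n1 + 2) powr (- \<beta> / 2)
      + holder_sn (\<beta> + 3 / 2) h * (2 * real n2 + 2) powr (- \<beta> / 3))"
    using pi_mult_le_pi_squared_mult holder_sn_nonneg[OF fin(2)]
    by (simp add: distrib_left mult.assoc)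
  finally show ?thesis .
qed

lemma neg_set_mollify_bound:
  assumes \<beta>: "-3 / 2 < \<beta>" "\<beta> < 0" and e: "e \<in> neg_set \<beta> f"
  obtains Bg Bh where "0 \<le> Bg" "0 \<le> Bh" "Bg + Bh \<le> e"
    "\<And>n1 n2 x. \<bar>integral unitsq (\<lambda>z. f z * bump2 n1 n2 x z) - integral unitsq f\<bar>
      \<le> 84 * pi ^ 2 * (Bg * (2 * real n1 + 2) powr (- \<beta> / 2) + Bh * (2 * real n2 + 2) powr (- \<beta> / 3))"
proof (cases "-1 < \<beta>")
  case True
  with e obtain c g h where e: "e = \<bar>c\<bar> + holder_sn (\<beta> + 1) g + holder_sn (\<beta> + 3 / 2) h"
    and per: "periodic2 g" "periodic2 h" and fin: "holder_fin (\<beta> + 1) g" "holder_fin (\<beta> + 3 / 2) h"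
    and dec: "decomp1 f c g h"
    unfolding neg_set_def by auto
  show ?thesis
  proof (rule that)
    show "0 \<le> holder_sn (\<beta> + 1) g" "0 \<le> holder_sn (\<beta> + 3 / 2) h"
      using fin by (simp_all add: holder_sn_nonneg)
    then show "holder_sn (\<beta> + 1) g + holder_sn (\<beta> + 3 / 2) h \<le> e"
      unfolding e by simp
    show "\<bar>integral unitsq (\<lambda>z. f z * bump2 n1 n2 x z) - integral unitsq f\<bar>
      \<le> 84 * pi ^ 2 * (holder_sn (\<beta> + 1) g * (2 * real n1 + 2) powr (- \<beta> / 2)
        + holder_sn (\<beta> + 3 / 2) h * (2 * real n2 + 2) powr (- \<beta> / 3))" for n1 n2 x
      unfolding decomp1_integral[OF dec] using True \<beta>(2) per fin dec by (rule decomp1_mollify_bound)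
  qed
next
  case False
  with e obtain c g h where e: "e = \<bar>c\<bar> + holder_sn (\<beta> + 2) g + holder_sn (\<beta> + 3 / 2) h"
    and per: "periodic2 g" "periodic2 h" and fin: "holder_fin (\<beta> + 2) g" "holder_fin (\<beta> + 3 / 2) h"
    and dec: "decomp2 f c g h"
    unfolding neg_set_def by auto
  show ?thesis
  proof (rule that)
    show "0 \<le> holder_sn (\<beta> + 2) g" "0 \<le> holder_sn (\<beta> + 3 / 2) h"
      using fin by (simp_all add: holder_sn_nonneg)
    then show "holder_sn (\<beta> + 2) g + holder_sn (\<beta> + 3 / 2) h \<le> e"
      unfolding e by simp
    show "\<bar>integral unitsq (\<lambda>z. f z * bump2 n1 n2 x z) - integral unitsq f\<bar>
      \<le> 84 * pi ^ 2 * (holder_sn (\<beta> + 2) g * (2 * real n1 + 2) powr (- \<beta> / 2)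
        + holder_sn (\<beta> + 3 / 2) h * (2 * real n2 + 2) powr (- \<beta> / 3))" for n1 n2 x
      unfolding decomp2_integral[OF dec] using \<beta>(1) _ per fin dec
      by (rule decomp2_mollify_bound) (use False in simp)
  qed
qed

lemma neg_set_nonneg: "-3 / 2 < \<beta> \<Longrightarrow> \<beta> < 0 \<Longrightarrow> e \<in> neg_set \<beta> f \<Longrightarrow> 0 \<le> e"
  by (erule (2) neg_set_mollify_bound) simp

lemma exists_bump_index: "4 \<le> u \<Longrightarrow> \<exists>n. u \<le> 2 * real n + 2 \<and> 2 * real n + 2 \<le> 2 * u"
  by (rule exI[of _ "nat \<lceil>u / 2\<rceil>"]) linarith

lemma powr_scale_le:
  fixes t k m a :: real
  assumes t: "0 < t" and k: "0 < k" and m: "t powr (- k) \<le> m" "m \<le> 2 * t powr (- k)" and a: "0 \<le> a"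
  shows "m powr (- a / k) \<le> t powr a" and "a \<le> k \<Longrightarrow> m powr (a / k) \<le> 2 * t powr (- a)"
proof -
  have tk: "0 < t powr (- k)"
    using t by simp
  have "m powr (- a / k) \<le> (t powr (- k)) powr (- a / k)"
    using tk m a k by (intro powr_mono2') (auto simp: divide_nonneg_pos)
  also have "\<dots> = t powr a"
    using k by (simp add: powr_powr)
  finally show "m powr (- a / k) \<le> t powr a" .
  assume "a \<le> k"
  have "m powr (a / k) \<le> (2 * t powr (- k)) powr (a / k)"
    using tk m a k by (intro powr_mono2) auto
  also have "\<dots> = 2 powr (a / k) * t powr (- a)"
    using t k by (simp add: powr_mult powr_powr)
  also have "2 powr (a / k) \<le> (2 :: real) powr 1"
    using \<open>a \<le> k\<close> k by (intro powr_mono) auto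
  finally show "m powr (a / k) \<le> 2 * t powr (- a)"
    by (simp add: mult_right_mono)
qed

lemma mean_deviation_scale_bound:
  assumes \<alpha>: "0 < \<alpha>" "\<alpha> < 3 / 2" and \<beta>: "-3 / 2 < \<beta>" "\<beta> < 0"
    and per: "periodic2 f" and hq: "\<And>x y. x \<noteq> y \<Longrightarrow> holder_quot \<alpha> f x y \<le> A"
    and e: "e \<in> neg_set \<beta> f" and t: "0 < t" "t \<le> 1 / 2"
  shows "\<bar>f x - integral unitsq f\<bar> \<le> 168 * pi ^ 2 * (A * t powr \<alpha> + e * t powr \<beta>)"
proof -
  obtain Bg Bh where B: "0 \<le> Bg" "0 \<le> Bh" "Bg + Bh \<le> e"
    and mollify: "\<And>n1 n2 x. \<bar>integral unitsq (\<lambda>z. f z * bump2 n1 n2 x z) - integral unitsq f\<bar>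
      \<le> 84 * pi ^ 2 * (Bg * (2 * real n1 + 2) powr (- \<beta> / 2) + Bh * (2 * real n2 + 2) powr (- \<beta> / 3))"
    using neg_set_mollify_bound[OF \<beta> e] by blast
  have "4 \<le> t powr (- 2)" "4 \<le> t powr (- 3)"
  proof -
    have "(1 / 2) powr (- 2) \<le> t powr (- 2)" "(1 / 2) powr (- 3) \<le> t powr (- 3)"
      using t by (intro powr_mono2'; simp)+
    moreover have "(1 / 2 :: real) powr (- 2) = 4" "(1 / 2 :: real) powr (- 3) = 8"
      by (simp_all add: powr_minus powr_numeral power2_eq_square power3_eq_cube)
    ultimately show "4 \<le> t powr (- 2)" "4 \<le> t powr (- 3)"
      by simp_all
  qed
  then obtain n1 n2 where n1: "t powr (- 2) \<le> 2 * real n1 + 2" "2 * real n1 + 2 \<le> 2 * t powr (- 2)"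
    and n2: "t powr (- 3) \<le> 2 * real n2 + 2" "2 * real n2 + 2 \<le> 2 * t powr (- 3)"
    using exists_bump_index by meson
  have "\<bar>f x - integral unitsq f\<bar> \<le> \<bar>integral unitsq (\<lambda>z. f z * bump2 n1 n2 x z) - f x\<bar>
      + \<bar>integral unitsq (\<lambda>z. f z * bump2 n1 n2 x z) - integral unitsq f\<bar>"
    by linarith
  also have "\<dots> \<le> 28 * A * (t powr \<alpha> + t powr \<alpha>) + 84 * pi ^ 2 * (Bg * (2 * t powr \<beta>) + Bh * (2 * t powr \<beta>))"
  proof (rule add_mono)
    have "(2 * real n1 + 2) powr (- \<alpha> / 2) + (2 * real n2 + 2) powr (- \<alpha> / 3) \<le> t powr \<alpha> + t powr \<alpha>"
      using \<alpha> by (intro add_mono powr_scale_le(1)[OF t(1) _ n1] powr_scale_le(1)[OF t(1) _ n2]) auto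
    with holder_mollify_error[OF per hq \<alpha>, of n1 n2 x] holder_bound_nonneg[OF hq]
    show "\<bar>integral unitsq (\<lambda>z. f z * bump2 n1 n2 x z) - f x\<bar> \<le> 28 * A * (t powr \<alpha> + t powr \<alpha>)"
      by (meson mult_left_mono order_trans zero_le_mult_iff zero_le_numeral)
    have "Bg * (2 * real n1 + 2) powr (- \<beta> / 2) + Bh * (2 * real n2 + 2) powr (- \<beta> / 3)
        \<le> Bg * (2 * t powr \<beta>) + Bh * (2 * t powr \<beta>)"
      using \<beta> B powr_scale_le(2)[OF t(1) _ n1, of "- \<beta>"] powr_scale_le(2)[OF t(1) _ n2, of "- \<beta>"]
      by (intro add_mono mult_left_mono) auto
    with mollify[of n1 n2 x]
    show "\<bar>integral unitsq (\<lambda>z. f z * bump2 n1 n2 x z) - integral unitsq f\<bar>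
        \<le> 84 * pi ^ 2 * (Bg * (2 * t powr \<beta>) + Bh * (2 * t powr \<beta>))"
      by (meson mult_left_mono order_trans zero_le_mult_iff zero_le_numeral zero_le_power2)
  qed
  also have "\<dots> \<le> 168 * pi ^ 2 * (A * t powr \<alpha> + e * t powr \<beta>)"
  proof -
    have "1 \<le> pi ^ 2"
      using pi_gt3 by (intro one_le_power) simp
    then have "56 * (A * t powr \<alpha>) \<le> 168 * pi ^ 2 * (A * t powr \<alpha>)"
      using holder_bound_nonneg[OF hq] by (intro mult_right_mono) auto
    moreover have "168 * pi ^ 2 * ((Bg + Bh) * t powr \<beta>) \<le> 168 * pi ^ 2 * (e * t powr \<beta>)"
      using B by (intro mult_left_mono mult_right_mono) auto
    ultimately show ?thesis
      by (simp add: algebra_simps)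
  qed
  finally show ?thesis .
qed

lemma mean_deviation_le:
  assumes \<alpha>: "0 < \<alpha>" "\<alpha> < 3 / 2"
    and per: "periodic2 f" and hq: "\<And>x y. x \<noteq> y \<Longrightarrow> holder_quot \<alpha> f x y \<le> A"
  shows "\<bar>f x - integral unitsq f\<bar> \<le> 168 * pi ^ 2 * A"
proof -
  have "\<bar>integral unitsq f - f x\<bar> \<le> 28 * A * (2 powr (- \<alpha> / 2) + 2 powr (- \<alpha> / 3))"
    using holder_mollify_error[OF per hq \<alpha>, of 0 0 x] by (simp add: bump2_0_0)
  also have "\<dots> \<le> 28 * A * 2"
  proof -
    have "(2 :: real) powr (- \<alpha> / 2) \<le> 1" "(2 :: real) powr (- \<alpha> / 3) \<le> 1"
      using \<alpha> powr_mono[of "- \<alpha> / 2" 0 "2 :: real"] powr_mono[of "- \<alpha> / 3" 0 "2 :: real"] by auto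
    then show ?thesis
      using holder_bound_nonneg[OF hq] by (intro mult_left_mono) auto
  qed
  also have "\<dots> \<le> 168 * pi ^ 2 * A"
  proof -
    have "1 \<le> pi ^ 2"
      using pi_gt3 by (intro one_le_power) simp
    then show ?thesis
      using holder_bound_nonneg[OF hq] by (simp add: mult_right_mono)
  qed
  finally show ?thesis
    by (simp add: abs_minus_commute)
qed

lemma optimize_scale:
  fixes X A N p q K L :: real
  assumes A: "0 < A" and p: "0 < p" and q: "q < 0" and K: "0 \<le> K" and L: "0 < L"
    and N: "N = A * L powr (p - q)"
    and XA: "X \<le> K * A" and Xt: "\<And>t. 0 < t \<Longrightarrow> t \<le> 1 / 2 \<Longrightarrow> X \<le> K * (A * t powr p + N * t powr q)"
  shows "X \<le> K * (2 + 2 powr p) * A * L powr p"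
proof (cases "L \<le> 1 / 2")
  case True
  have "X \<le> K * (A * L powr p + N * L powr q)"
    using Xt[OF L True] .
  also have "N * L powr q = A * L powr p"
    unfolding N by (simp add: powr_add[symmetric] mult.assoc)
  finally have "X \<le> 2 * (K * A * L powr p)"
    by (simp add: algebra_simps)
  also have "\<dots> \<le> (2 + 2 powr p) * (K * A * L powr p)"
    using K A by (intro mult_right_mono) auto
  finally show ?thesis
    by (simp add: algebra_simps)
next
  case False
  then have "1 \<le> (2 * L) powr p"
    using p by (intro ge_one_powr_ge_zero) auto
  then have "K * A * 1 \<le> K * A * (2 powr p * L powr p)"
    using K A L by (intro mult_left_mono) (auto simp: powr_mult)
  with XA have "X \<le> 2 powr p * (K * A * L powr p)"
    by (simp add: algebra_simps)
  also have "\<dots> \<le> (2 + 2 powr p) * (K * A * L powr p)"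
    using K A by (intro mult_right_mono) auto
  finally show ?thesis
    by (simp add: algebra_simps)
qed

lemma part1_scale_bound:
  assumes hq: "\<And>x y. x \<noteq> y \<Longrightarrow> holder_quot \<alpha> f x y \<le> A" and \<alpha>: "1 < \<alpha>"
    and dev: "\<And>z. \<bar>f z - c\<bar> \<le> K * (A * t powr \<alpha> + N * t powr \<beta>)"
    and K: "0 \<le> K" and N: "0 \<le> N" and t: "0 < t"
  shows "\<bar>part1 f x\<bar> \<le> (2 * K + 1) * (A * t powr (\<alpha> - 1) + N * t powr (\<beta> - 1))"
proof -
  define y where "y = (fst x + t, snd x)"
  have "x \<noteq> y" "dT y x = t"
    using t by (auto simp: y_def dT_def prod_eq_iff)
  then have "\<bar>f y - f x - part1 f x * t\<bar> \<le> A * t powr \<alpha>"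
    using hq[of x y] \<alpha> by (simp add: holder_quot_le_iff holder_incr_def y_def)
  moreover have "\<bar>f y - f x\<bar> \<le> 2 * K * (A * t powr \<alpha> + N * t powr \<beta>)"
    using dev[of x] dev[of y] by linarith
  moreover have "0 \<le> N * t powr \<beta>"
    using N by simp
  ultimately have "\<bar>part1 f x\<bar> * t \<le> (2 * K + 1) * (A * t powr \<alpha> + N * t powr \<beta>)"
    using t by (simp add: abs_mult algebra_simps)
  also have "A * t powr \<alpha> + N * t powr \<beta> = (A * t powr (\<alpha> - 1) + N * t powr (\<beta> - 1)) * t"
    using t by (simp add: algebra_simps powr_diff)
  finally show ?thesis
    using t by (simp add: mult.assoc)
qed

lemma powr_exchange_le:
  fixes L r \<alpha> \<gamma> :: real
  assumes "0 < r" "0 < L" "(\<gamma> \<le> 1 \<and> r \<le> L) \<or> (1 < \<gamma> \<and> L \<le> r)"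
  shows "L powr (\<alpha> - 1) * r \<le> L powr (\<alpha> - \<gamma>) * r powr \<gamma>"
proof -
  have "L powr (\<gamma> - 1) \<le> r powr (\<gamma> - 1)"
    using assms by (auto intro: powr_mono2 powr_mono2')
  then have "L powr (\<alpha> - \<gamma>) * L powr (\<gamma> - 1) * r \<le> L powr (\<alpha> - \<gamma>) * r powr (\<gamma> - 1) * r"
    using assms by (intro mult_right_mono mult_left_mono) auto
  moreover have "r powr (\<gamma> - 1) * r = r powr \<gamma>"
    using assms(1) by (simp add: powr_diff)
  ultimately show ?thesis
    by (simp add: powr_add[symmetric] mult.assoc)
qed

lemma holder_incr_small_scale:
  assumes hq: "\<And>x y. x \<noteq> y \<Longrightarrow> holder_quot \<alpha> f x y \<le> A" and xy: "x \<noteq> y"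
    and \<gamma>: "0 < \<gamma>" "\<gamma> < \<alpha>" and L: "dT y x \<le> L"
    and D: "1 < \<alpha> \<Longrightarrow> \<bar>part1 f x\<bar> \<le> K1 * A * L powr (\<alpha> - 1)" and K1: "0 \<le> K1"
  shows "holder_incr \<gamma> f x y \<le> (K1 + 1) * (A * L powr (\<alpha> - \<gamma>) * dT y x powr \<gamma>)"
proof -
  define r where "r = dT y x"
  define M where "M = A * L powr (\<alpha> - \<gamma>) * r powr \<gamma>"
  have r: "0 < r" "r \<le> L" and A: "0 \<le> A"
    using dT_pos[OF xy] L holder_bound_nonneg[OF hq] by (auto simp: r_def)
  have M: "0 \<le> M"
    using A by (simp add: M_def)
  have "holder_incr \<alpha> f x y \<le> A * r powr \<alpha>"
    using hq[OF xy] by (simp add: holder_quot_le_iff[OF xy] r_def)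
  also have "r powr \<alpha> = r powr (\<alpha> - \<gamma>) * r powr \<gamma>"
    by (simp add: powr_add[symmetric])
  also have "A * \<dots> \<le> M"
    unfolding M_def mult.assoc using r \<gamma> A by (intro mult_left_mono mult_right_mono powr_mono2) auto
  finally have "holder_incr \<alpha> f x y \<le> M" .
  show ?thesis
  proof (cases "\<gamma> \<le> 1 \<and> 1 < \<alpha>")
    case True
    have "\<bar>part1 f x * (fst y - fst x)\<bar> \<le> K1 * A * L powr (\<alpha> - 1) * r"
      using D True dT_def by (auto simp: abs_mult r_def dT_def intro!: mult_mono)
    also have "\<dots> \<le> K1 * M"
      using powr_exchange_le[of r L \<gamma> \<alpha>] r True K1 A
      by (simp add: M_def mult.assoc mult_left_mono)
    finally show ?thesis
      using \<open>holder_incr \<alpha> f x y \<le> M\<close> True unfolding holder_incr_def M_def r_def by (auto simp: algebra_simps)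
  next
    case False
    then have "holder_incr \<gamma> f x y = holder_incr \<alpha> f x y"
      using \<gamma> by (auto simp: holder_incr_def)
    moreover have "M \<le> (K1 + 1) * M"
      using K1 M by (simp add: algebra_simps)
    ultimately show ?thesis
      using \<open>holder_incr \<alpha> f x y \<le> M\<close> unfolding M_def r_def by linarith
  qed
qed

lemma holder_incr_large_scale:
  assumes dev: "\<And>z. \<bar>f z - c\<bar> \<le> K0 * A * L powr \<alpha>" and xy: "x \<noteq> y"
    and \<gamma>: "0 < \<gamma>" "\<gamma> < \<alpha>" and L: "0 < L" "L \<le> dT y x"
    and D: "1 < \<alpha> \<Longrightarrow> \<bar>part1 f x\<bar> \<le> K1 * A * L powr (\<alpha> - 1)"
    and K: "0 \<le> K0" "0 \<le> K1" and A: "0 \<le> A"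
  shows "holder_incr \<gamma> f x y \<le> (2 * K0 + K1) * (A * L powr (\<alpha> - \<gamma>) * dT y x powr \<gamma>)"
proof -
  define r where "r = dT y x"
  define M where "M = A * L powr (\<alpha> - \<gamma>) * r powr \<gamma>"
  have r: "0 < r" "L \<le> r"
    using dT_pos[OF xy] L by (auto simp: r_def)
  have "\<bar>f y - f x\<bar> \<le> 2 * K0 * (A * L powr \<alpha>)"
    using dev[of x] dev[of y] by (simp add: algebra_simps)
  also have "L powr \<alpha> = L powr (\<alpha> - \<gamma>) * L powr \<gamma>"
    by (simp add: powr_add[symmetric])
  also have "2 * K0 * (A * \<dots>) \<le> 2 * K0 * M"
    unfolding M_def mult.assoc using r L \<gamma> A K by (intro mult_left_mono powr_mono2) auto
  finally have fyx: "\<bar>f y - f x\<bar> \<le> 2 * K0 * M" .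
  show ?thesis
  proof (cases "\<gamma> \<le> 1")
    case True
    have "0 \<le> K1 * M"
      using K A by (simp add: M_def)
    with True fyx show ?thesis
      by (simp add: holder_incr_def M_def r_def algebra_simps)
  next
    case False
    have "\<bar>part1 f x * (fst y - fst x)\<bar> \<le> K1 * A * L powr (\<alpha> - 1) * r"
      using D False \<gamma> by (auto simp: abs_mult r_def dT_def intro!: mult_mono)
    also have "\<dots> \<le> K1 * M"
      using powr_exchange_le[of r L \<gamma> \<alpha>] r L False K A
      by (simp add: M_def mult.assoc mult_left_mono)
    finally show ?thesis
      using fyx False unfolding holder_incr_def M_def r_def by (auto simp: algebra_simps)
  qed
qed

lemma holder_quot_scale_interpolation:
  assumes hq: "\<And>x y. x \<noteq> y \<Longrightarrow> holder_quot \<alpha> f x y \<le> A" and xy: "x \<noteq> y"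
    and \<gamma>: "0 < \<gamma>" "\<gamma> < \<alpha>" and L: "0 < L"
    and dev: "\<And>z. \<bar>f z - c\<bar> \<le> K0 * A * L powr \<alpha>"
    and D: "1 < \<alpha> \<Longrightarrow> \<bar>part1 f x\<bar> \<le> K1 * A * L powr (\<alpha> - 1)"
    and K: "0 \<le> K0" "0 \<le> K1"
  shows "holder_quot \<gamma> f x y \<le> (2 * K0 + K1 + 1) * A * L powr (\<alpha> - \<gamma>)"
proof -
  have A: "0 \<le> A"
    by (rule holder_bound_nonneg[OF hq])
  have "holder_incr \<gamma> f x y \<le> (K1 + 1) * (A * L powr (\<alpha> - \<gamma>) * dT y x powr \<gamma>)
      \<or> holder_incr \<gamma> f x y \<le> (2 * K0 + K1) * (A * L powr (\<alpha> - \<gamma>) * dT y x powr \<gamma>)"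
    using holder_incr_small_scale[OF hq xy \<gamma> _ D K(2)] holder_incr_large_scale[OF dev xy \<gamma> L _ D K A]
    by fastforce
  moreover have "0 \<le> A * L powr (\<alpha> - \<gamma>) * dT y x powr \<gamma>"
    using A by simp
  ultimately have "holder_incr \<gamma> f x y \<le> (2 * K0 + K1 + 1) * (A * L powr (\<alpha> - \<gamma>) * dT y x powr \<gamma>)"
    using K by (smt (verit) mult_right_mono)
  then show ?thesis
    by (simp add: holder_quot_le_iff[OF xy] mult.assoc)
qed

lemma scale_powr_eq:
  fixes A N a d :: real
  assumes "0 < A" "0 < N" "0 < d"
  shows "A * ((N / A) powr (1 / d)) powr a = N powr (a / d) * A powr (1 - a / d)"
proof -
  have "A * ((N / A) powr (1 / d)) powr a = A powr 1 * (N powr (a / d) / A powr (a / d))"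
    using assms by (simp add: powr_powr powr_divide)
  also have "\<dots> = N powr (a / d) * A powr (1 - a / d)"
    by (simp add: powr_diff)
  finally show ?thesis .
qed

lemma le_Inf_powr:
  fixes S :: "real set"
  assumes S: "S \<noteq> {}" "\<And>e. e \<in> S \<Longrightarrow> 0 \<le> e" and r: "0 < r"
    and Q: "\<And>e N. e \<in> S \<Longrightarrow> e < N \<Longrightarrow> Q \<le> C * N powr r * B"
  shows "Q \<le> C * Inf S powr r * B"
proof -
  define I where "I = Inf S"
  have I: "0 \<le> I"
    unfolding I_def using S by (intro cInf_greatest) auto
  have "Q \<le> C * (I + \<epsilon>) powr r * B" if \<epsilon>: "0 < \<epsilon>" for \<epsilon>
  proof -
    obtain e where "e \<in> S" "e < I + \<epsilon>"
      using cInf_lessD[OF S(1), of "I + \<epsilon>"] \<epsilon> by (auto simp: I_def)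
    then show ?thesis
      by (rule Q)
  qed
  moreover have "((\<lambda>\<epsilon>. C * (I + \<epsilon>) powr r * B) \<longlongrightarrow> C * (I + 0) powr r * B) (at_right 0)"
    using r I by (intro tendsto_intros tendsto_powr') (auto simp: eventually_at_right_less eventually_at_filter)
  ultimately have "Q \<le> C * (I + 0) powr r * B"
    by (intro tendsto_lowerbound[of "\<lambda>\<epsilon>. C * (I + \<epsilon>) powr r * B"])
       (auto simp: eventually_at_right_less intro: eventually_mono[OF eventually_at_right_less])
  then show ?thesis
    by (simp add: I_def)
qed

lemma Sup_le_Inf_powr:
  fixes Q S :: "real set"
  assumes "Q \<noteq> {}" "S \<noteq> {}" "\<And>e. e \<in> S \<Longrightarrow> 0 \<le> e" "0 < r"
    and bound: "\<And>q e N. q \<in> Q \<Longrightarrow> e \<in> S \<Longrightarrow> e < N \<Longrightarrow> q \<le> C * N powr r * B"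
  shows "bdd_above Q \<and> Sup Q \<le> C * Inf S powr r * B"
proof
  obtain e where "e \<in> S"
    using assms(2) by blast
  then show "bdd_above Q"
    using bound[of _ e "e + 1"] by (intro bdd_aboveI[where M = "C * (e + 1) powr r * B"]) auto
  show "Sup Q \<le> C * Inf S powr r * B"
    using assms by (intro cSup_least le_Inf_powr) auto
qed

lemma deviation_bounds_at_scale:
  assumes \<alpha>: "0 < \<alpha>" "\<alpha> < 3 / 2" and \<beta>: "-3 / 2 < \<beta>" "\<beta> < 0"
    and per: "periodic2 f" and fin: "holder_fin \<alpha> f" and e: "e \<in> neg_set \<beta> f" "e < N"
    and A: "0 < holder_sn \<alpha> f"
  defines "L \<equiv> (N / holder_sn \<alpha> f) powr (1 / (\<alpha> - \<beta>))"
  shows "\<bar>f z - integral unitsq f\<bar> \<le> 168 * pi ^ 2 * (2 + 2 powr \<alpha>) * holder_sn \<alpha> f * L powr \<alpha>"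
    and "1 < \<alpha> \<Longrightarrow> \<bar>part1 f z\<bar> \<le> (336 * pi ^ 2 + 1) * (2 + 2 powr (\<alpha> - 1)) * holder_sn \<alpha> f * L powr (\<alpha> - 1)"
proof -
  define K where "K = 168 * pi ^ 2"
  have K: "0 \<le> K"
    by (simp add: K_def)
  have hq: "\<And>x y. x \<noteq> y \<Longrightarrow> holder_quot \<alpha> f x y \<le> holder_sn \<alpha> f"
    by (rule holder_quot_le_holder_sn[OF fin])
  have dev0: "\<bar>f z - integral unitsq f\<bar> \<le> K * holder_sn \<alpha> f" for z
    unfolding K_def by (rule mean_deviation_le[OF \<alpha> per hq])
  have N: "0 < N"
    using neg_set_nonneg[OF \<beta> e(1)] e(2) by linarith
  have L: "0 < L"
    using N A by (simp add: L_def)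
  have NL: "N = holder_sn \<alpha> f * L powr (\<alpha> - \<beta>)"
    using N A \<alpha> \<beta> by (simp add: L_def powr_powr)
  have dev: "\<bar>f z - integral unitsq f\<bar> \<le> K * (holder_sn \<alpha> f * t powr \<alpha> + N * t powr \<beta>)"
    if "0 < t" "t \<le> 1 / 2" for t z
  proof -
    have "e * t powr \<beta> \<le> N * t powr \<beta>"
      using e(2) by (simp add: mult_right_mono)
    then show ?thesis
      using mean_deviation_scale_bound[OF \<alpha> \<beta> per hq e(1) that, of z] K unfolding K_def
      by (smt (verit) mult_left_mono)
  qed
  show "\<bar>f z - integral unitsq f\<bar> \<le> 168 * pi ^ 2 * (2 + 2 powr \<alpha>) * holder_sn \<alpha> f * L powr \<alpha>"
    using optimize_scale[OF A \<alpha>(1) \<beta>(2) K L NL dev0 dev]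
    by (simp add: K_def)
  assume "1 < \<alpha>"
  have XA: "\<bar>part1 f z\<bar> \<le> (2 * K + 1) * holder_sn \<alpha> f"
  proof -
    have "0 \<le> K * (holder_sn \<alpha> f * 2)"
      using A K by simp
    then show ?thesis
      using holder_part1_bound[OF per hq \<open>1 < \<alpha>\<close>, of z] by (simp add: algebra_simps)
  qed
  have Xt: "\<bar>part1 f z\<bar> \<le> (2 * K + 1) * (holder_sn \<alpha> f * t powr (\<alpha> - 1) + N * t powr (\<beta> - 1))"
    if "0 < t" "t \<le> 1 / 2" for t
    using part1_scale_bound[OF hq \<open>1 < \<alpha>\<close> dev[OF that] K] N that by simp
  have "N = holder_sn \<alpha> f * L powr ((\<alpha> - 1) - (\<beta> - 1))"
    using NL by simp
  from optimize_scale[OF A _ _ _ L this XA Xt] \<open>1 < \<alpha>\<close> \<beta> K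
  have "\<bar>part1 f z\<bar> \<le> (2 * K + 1) * (2 + 2 powr (\<alpha> - 1)) * holder_sn \<alpha> f * L powr (\<alpha> - 1)"
    by simp
  then show "\<bar>part1 f z\<bar> \<le> (336 * pi ^ 2 + 1) * (2 + 2 powr (\<alpha> - 1)) * holder_sn \<alpha> f * L powr (\<alpha> - 1)"
    by (simp add: K_def)
qed

lemma sup_interpolation:
  assumes \<alpha>: "0 < \<alpha>" "\<alpha> < 3 / 2" and \<beta>: "-3 / 2 < \<beta>" "\<beta> < 0"
  obtains C where "0 < C"
    "\<And>f e N z. periodic2 f \<Longrightarrow> holder_fin \<alpha> f \<Longrightarrow> e \<in> neg_set \<beta> f \<Longrightarrow> e < N \<Longrightarrow>
      \<bar>f z - integral unitsq f\<bar> \<le> C * N powr (\<alpha> / (\<alpha> - \<beta>)) * holder_sn \<alpha> f powr (1 - \<alpha> / (\<alpha> - \<beta>))"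
proof
  show "0 < 168 * pi ^ 2 * (2 + 2 powr \<alpha>)"
    by (simp add: add_pos_pos)
  fix f e N z
  assume per: "periodic2 f" and fin: "holder_fin \<alpha> f" and e: "e \<in> neg_set \<beta> f" "e < N"
  have N: "0 < N"
    using neg_set_nonneg[OF \<beta> e(1)] e(2) by linarith
  show "\<bar>f z - integral unitsq f\<bar> \<le> 168 * pi ^ 2 * (2 + 2 powr \<alpha>)
      * N powr (\<alpha> / (\<alpha> - \<beta>)) * holder_sn \<alpha> f powr (1 - \<alpha> / (\<alpha> - \<beta>))"
  proof (cases "holder_sn \<alpha> f = 0")
    case True
    then show ?thesis
      using mean_deviation_le[OF \<alpha> per holder_quot_le_holder_sn[OF fin], of z] by simp
  next
    case False
    then have A: "0 < holder_sn \<alpha> f"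
      using holder_sn_nonneg[OF fin] by simp
    from deviation_bounds_at_scale(1)[OF \<alpha> \<beta> per fin e A, of z]
      scale_powr_eq[OF A N, of "\<alpha> - \<beta>" \<alpha>] \<alpha> \<beta>
    show ?thesis
      by (simp add: mult.assoc)
  qed
qed

lemma holder_interpolation:
  assumes \<alpha>: "0 < \<alpha>" "\<alpha> < 3 / 2" and \<beta>: "-3 / 2 < \<beta>" "\<beta> < 0" and \<gamma>: "0 < \<gamma>" "\<gamma> < \<alpha>"
  obtains C where "0 < C"
    "\<And>f e N x y. periodic2 f \<Longrightarrow> holder_fin \<alpha> f \<Longrightarrow> e \<in> neg_set \<beta> f \<Longrightarrow> e < N \<Longrightarrow> x \<noteq> y \<Longrightarrow>
      holder_quot \<gamma> f x y \<le> C * N powr ((\<alpha> - \<gamma>) / (\<alpha> - \<beta>)) * holder_sn \<alpha> f powr (1 - (\<alpha> - \<gamma>) / (\<alpha> - \<beta>))"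
proof
  define K0 where "K0 = 168 * pi ^ 2 * (2 + 2 powr \<alpha>)"
  define K1 where "K1 = (336 * pi ^ 2 + 1) * (2 + 2 powr (\<alpha> - 1))"
  have K: "0 \<le> K0" "0 \<le> K1"
    by (simp_all add: K0_def K1_def)
  then show "0 < 2 * K0 + K1 + 1"
    by simp
  fix f e N and x y :: "real \<times> real"
  assume per: "periodic2 f" and fin: "holder_fin \<alpha> f" and e: "e \<in> neg_set \<beta> f" "e < N" and xy: "x \<noteq> y"
  have hq: "\<And>x y. x \<noteq> y \<Longrightarrow> holder_quot \<alpha> f x y \<le> holder_sn \<alpha> f"
    by (rule holder_quot_le_holder_sn[OF fin])
  have N: "0 < N"
    using neg_set_nonneg[OF \<beta> e(1)] e(2) by linarith
  show "holder_quot \<gamma> f x y \<le> (2 * K0 + K1 + 1)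
      * N powr ((\<alpha> - \<gamma>) / (\<alpha> - \<beta>)) * holder_sn \<alpha> f powr (1 - (\<alpha> - \<gamma>) / (\<alpha> - \<beta>))"
  proof (cases "holder_sn \<alpha> f = 0")
    case True
    then have "f z = integral unitsq f" for z
      using mean_deviation_le[OF \<alpha> per hq, of z] by simp
    moreover have "part1 f x = 0" if "1 < \<alpha>"
      using holder_part1_bound[OF per hq that, of x] True by simp
    ultimately have "holder_incr \<gamma> f x y \<le> 0 * dT y x powr \<gamma>"
      using \<gamma> by (auto simp: holder_incr_def)
    then have "holder_quot \<gamma> f x y \<le> 0"
      by (simp only: holder_quot_le_iff[OF xy])
    with True show ?thesis
      by simp
  next
    case False
    then have A: "0 < holder_sn \<alpha> f"
      using holder_sn_nonneg[OF fin] by simp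
    define L where "L = (N / holder_sn \<alpha> f) powr (1 / (\<alpha> - \<beta>))"
    have L: "0 < L"
      using A N by (simp add: L_def)
    note bounds = deviation_bounds_at_scale[OF \<alpha> \<beta> per fin e A, folded L_def K0_def K1_def]
    have "holder_quot \<gamma> f x y \<le> (2 * K0 + K1 + 1) * holder_sn \<alpha> f * L powr (\<alpha> - \<gamma>)"
      using hq xy \<gamma> L bounds K by (rule holder_quot_scale_interpolation)
    with scale_powr_eq[OF A N, of "\<alpha> - \<beta>" "\<alpha> - \<gamma>"] \<alpha> \<beta>
    show ?thesis
      by (simp add: L_def mult.assoc)
  qed
qed

theorem mainTheorem18:
  fixes \<alpha> \<beta> :: real
  assumes "-3/2 < \<beta>" and "\<beta> < 0" and "0 < \<alpha>" and "\<alpha> < 3/2"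
  shows "(\<forall>\<gamma>. 0 < \<gamma> \<and> \<gamma> < \<alpha> \<longrightarrow>
           (\<exists>C>0. \<forall>f. periodic2 f \<and> holder_fin \<alpha> f \<and> neg_fin \<beta> f \<longrightarrow>
              holder_fin \<gamma> f \<and>
              holder_sn \<gamma> f \<le> C * neg_sn \<beta> f powr ((\<alpha> - \<gamma>) / (\<alpha> - \<beta>))
                                   * holder_sn \<alpha> f powr (1 - (\<alpha> - \<gamma>) / (\<alpha> - \<beta>))))
       \<and> (\<exists>C>0. \<forall>f. periodic2 f \<and> holder_fin \<alpha> f \<and> neg_fin \<beta> f \<and> integral unitsq f = 0 \<longrightarrow>
              bdd_above (range (\<lambda>x. \<bar>f x\<bar>)) \<and>
              sup_norm f \<le> C * neg_sn \<beta> f powr (\<alpha> / (\<alpha> - \<beta>))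
                              * holder_sn \<alpha> f powr (1 - \<alpha> / (\<alpha> - \<beta>)))"
proof (intro conjI allI impI)
  have \<alpha>: "0 < \<alpha>" "\<alpha> < 3 / 2" and \<beta>: "-3 / 2 < \<beta>" "\<beta> < 0"
    using assms by simp_all
  fix \<gamma> :: real
  assume \<gamma>: "0 < \<gamma> \<and> \<gamma> < \<alpha>"
  then obtain C where "0 < C" and bound: "\<And>f e N x y. periodic2 f \<Longrightarrow> holder_fin \<alpha> f \<Longrightarrow> e \<in> neg_set \<beta> f
      \<Longrightarrow> e < N \<Longrightarrow> x \<noteq> y \<Longrightarrow> holder_quot \<gamma> f x y
        \<le> C * N powr ((\<alpha> - \<gamma>) / (\<alpha> - \<beta>)) * holder_sn \<alpha> f powr (1 - (\<alpha> - \<gamma>) / (\<alpha> - \<beta>))"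
    using holder_interpolation[OF \<alpha> \<beta>] by blast
  show "\<exists>C>0. \<forall>f. periodic2 f \<and> holder_fin \<alpha> f \<and> neg_fin \<beta> f \<longrightarrow> holder_fin \<gamma> f \<and>
      holder_sn \<gamma> f \<le> C * neg_sn \<beta> f powr ((\<alpha> - \<gamma>) / (\<alpha> - \<beta>))
        * holder_sn \<alpha> f powr (1 - (\<alpha> - \<gamma>) / (\<alpha> - \<beta>))"
  proof (intro exI[of _ C] conjI allI impI \<open>0 < C\<close>)
    fix f
    assume f: "periodic2 f \<and> holder_fin \<alpha> f \<and> neg_fin \<beta> f"
    have "bdd_above {holder_quot \<gamma> f x y | x y. x \<noteq> y} \<and> holder_sn \<gamma> f
        \<le> C * neg_sn \<beta> f powr ((\<alpha> - \<gamma>) / (\<alpha> - \<beta>)) * holder_sn \<alpha> f powr (1 - (\<alpha> - \<gamma>) / (\<alpha> - \<beta>))"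
      unfolding holder_sn_def[of \<gamma>] neg_sn_def
    proof (rule Sup_le_Inf_powr)
      show "{holder_quot \<gamma> f x y | x y. x \<noteq> y} \<noteq> {}"
        by (auto intro!: exI[of _ "(0, 0)"] exI[of _ "(1, 0)"])
      show "neg_set \<beta> f \<noteq> {}" "0 < (\<alpha> - \<gamma>) / (\<alpha> - \<beta>)"
        using f \<gamma> \<beta> by (simp_all add: neg_fin_def)
    qed (use f bound neg_set_nonneg[OF \<beta>] in blast)+
    then show "holder_fin \<gamma> f" "holder_sn \<gamma> f
        \<le> C * neg_sn \<beta> f powr ((\<alpha> - \<gamma>) / (\<alpha> - \<beta>)) * holder_sn \<alpha> f powr (1 - (\<alpha> - \<gamma>) / (\<alpha> - \<beta>))"
      using f \<gamma> by (auto simp: holder_fin_def)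
  qed
next
  have \<alpha>: "0 < \<alpha>" "\<alpha> < 3 / 2" and \<beta>: "-3 / 2 < \<beta>" "\<beta> < 0"
    using assms by simp_all
  obtain C where "0 < C" and bound: "\<And>f e N z. periodic2 f \<Longrightarrow> holder_fin \<alpha> f \<Longrightarrow> e \<in> neg_set \<beta> f
      \<Longrightarrow> e < N \<Longrightarrow> \<bar>f z - integral unitsq f\<bar>
        \<le> C * N powr (\<alpha> / (\<alpha> - \<beta>)) * holder_sn \<alpha> f powr (1 - \<alpha> / (\<alpha> - \<beta>))"
    using sup_interpolation[OF \<alpha> \<beta>] by blast
  show "\<exists>C>0. \<forall>f. periodic2 f \<and> holder_fin \<alpha> f \<and> neg_fin \<beta> f \<and> integral unitsq f = 0 \<longrightarrow>
      bdd_above (range (\<lambda>x. \<bar>f x\<bar>)) \<and>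
      sup_norm f \<le> C * neg_sn \<beta> f powr (\<alpha> / (\<alpha> - \<beta>)) * holder_sn \<alpha> f powr (1 - \<alpha> / (\<alpha> - \<beta>))"
  proof (intro exI[of _ C] conjI[OF \<open>0 < C\<close>] allI impI)
    fix f
    assume f: "periodic2 f \<and> holder_fin \<alpha> f \<and> neg_fin \<beta> f \<and> integral unitsq f = 0"
    show "bdd_above (range (\<lambda>x. \<bar>f x\<bar>)) \<and>
        sup_norm f \<le> C * neg_sn \<beta> f powr (\<alpha> / (\<alpha> - \<beta>)) * holder_sn \<alpha> f powr (1 - \<alpha> / (\<alpha> - \<beta>))"
      unfolding sup_norm_def neg_sn_def
    proof (rule Sup_le_Inf_powr)
      show "neg_set \<beta> f \<noteq> {}" "0 < \<alpha> / (\<alpha> - \<beta>)"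
        using f \<alpha> \<beta> by (simp_all add: neg_fin_def)
      show "q \<le> C * N powr (\<alpha> / (\<alpha> - \<beta>)) * holder_sn \<alpha> f powr (1 - \<alpha> / (\<alpha> - \<beta>))"
        if "q \<in> range (\<lambda>x. \<bar>f x\<bar>)" "e \<in> neg_set \<beta> f" "e < N" for q e N
        using that f bound[of f e N] by auto
    qed (use neg_set_nonneg[OF \<beta>] in auto)
  qed
qed

end
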